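(* Let $k,l\ge0$ be integers. The decomposition $$\mathcal{P}_{k,l}(\mathbb{R}^{2m},\mathbb{C})=\bigoplus_{a,b}|x|^{2a}|u|^{2b}\Big(\mathcal{P}_{k-2a,l-2b}\cap\ker(\Delta_x,\Delta_u)\Big),\qquad \mathcal{P}_{p,q}\cap\ker(\Delta_x,\Delta_u)=\bigoplus_{i,j}C^iS_u^j\,\mathcal{H}_{p-i+j,q-i-j},$$ i.e. the full decomposition of $\mathcal{P}_{k,l}(\mathbb{R}^{2m},\mathbb{C})$ into the subspaces $|x|^{2a}|u|^{2b}C^iS_u^j\mathcal{H}_{k-2a-i+j,\,l-2b-i-j}$, which are irreducible under the orthogonal group, is a decomposition into mutually orthogonal subspaces with respect to the Fischer inner product.
   Context: Fix an integer $m>4$. For $x,u\in\mathbb{R}^m$ let $\mathcal{P}_{p,q}(\mathbb{R}^{2m},\mathbb{C})$ be complex polynomials of degree $p$ in $x$ and $q$ in $u$; $\mathrm{SO}(m)$ acts by $(g\cdot P)(x,u)=P(g^{-1}x,g^{-1}u)$. The Fischer inner product is $[P,Q]_F=\overline{P}(\partial_x,\partial_u)Q(x,u)\big|_{x=u=0}$ ($\overline{P}(\partial_x,\partial_u)$: conjugate coefficients of $P$ and replace $x_j,u_j$ by $\partial_{x_j},\partial_{u_j}$). Write $|x|^2=\sum x_j^2$, $\langle u,x\rangle=\sum u_jx_j$, $\Delta_x=\sum\partial_{x_j}^2$, $\Delta_u=\sum\partial_{u_j}^2$, $\langle\partial_u,\partial_x\rangle=\sum\partial_{u_j}\partial_{x_j}$,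 $\langle x,\partial_u\rangle=\sum x_j\partial_{u_j}$, $\langle u,\partial_x\rangle=\sum u_j\partial_{x_j}$, $\ker(D_1,\dots,D_r)=\bigcap\ker D_i$. Every $P\in\mathcal{P}_{p,q}$ is uniquely $\sum_{a,b\ge0}|x|^{2a}|u|^{2b}H'_{p-2a,q-2b}$ with $H'_{p-2a,q-2b}\in\mathcal{P}_{p-2a,q-2b}\cap\ker(\Delta_x,\Delta_u)$; $\pi_{\mathfrak{s}}P:=H'_{p,q}$. On $\ker(\Delta_x,\Delta_u)$: $S_u=\pi_{\mathfrak{s}}\langle u,\partial_x\rangle$, $C=\pi_{\mathfrak{s}}\langle u,x\rangle$. Simplicial harmonics $\mathcal{H}_{a,b}=\mathcal{P}_{a,b}\cap\ker(\Delta_x,\Delta_u,\langle\partial_u,\partial_x\rangle,\langle x,\partial_u\rangle)$; $\mathcal{H}_{a,b}=\{0\}$ if an index is negative. The inner decomposition runs over $0\le i\le\min(p,q)$, $0\le j\le \min(p,q)-i$ (only nonzero summands matter). *)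

theory Defs
  imports Complex_Main "HOL-Library.Poly_Mapping"
begin

text \<open>For fixed m, the variable
with index j < m is x_(j+1) and the variable with index m+j (j < m) is u_(j+1).\<close>

type_synonym cpoly = "(nat \<Rightarrow>\<^sub>0 nat) \<Rightarrow>\<^sub>0 complex"

definition var :: "nat \<Rightarrow> cpoly" where
  "var i = Poly_Mapping.single (Poly_Mapping.single i 1) 1"

definition const :: "complex \<Rightarrow> cpoly" where
  "const c = Poly_Mapping.single 0 c"

definition pderiv :: "nat \<Rightarrow> cpoly \<Rightarrow> cpoly" where
  "pderiv i P = (\<Sum>\<alpha>\<in>Poly_Mapping.keys P. if 0 < Poly_Mapping.lookup (\<alpha> :: nat \<Rightarrow>\<^sub>0 nat) i
      then Poly_Mapping.single (\<alpha> - Poly_Mapping.single i 1) (of_nat (Poly_Mapping.lookup \<alpha> i) * Poly_Mapping.lookup (P :: cpoly) \<alpha>)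
      else 0)"

definition dmono :: "(nat \<Rightarrow>\<^sub>0 nat) \<Rightarrow> cpoly \<Rightarrow> cpoly" where
  "dmono \<alpha> Q = fold (\<lambda>i R. (pderiv i ^^ Poly_Mapping.lookup \<alpha> i) R) (sorted_list_of_set (Poly_Mapping.keys \<alpha>)) Q"

text \<open>Fischer inner product: apply conj(P)(\<partial>) to Q and evaluate at 0.\<close>
definition fischer :: "cpoly \<Rightarrow> cpoly \<Rightarrow> complex" where
  "fischer P Q = Poly_Mapping.lookup (\<Sum>\<alpha>\<in>Poly_Mapping.keys P. const (cnj (Poly_Mapping.lookup P \<alpha>)) * dmono \<alpha> Q) 0"

definition X :: "nat \<Rightarrow> nat \<Rightarrow> cpoly" where "X m j = var j"
definition U :: "nat \<Rightarrow> nat \<Rightarrow> cpoly" where "U m j = var (m + j)"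

definition normx :: "nat \<Rightarrow> cpoly" where "normx m = (\<Sum>j<m. X m j ^ 2)"
definition normu :: "nat \<Rightarrow> cpoly" where "normu m = (\<Sum>j<m. U m j ^ 2)"
definition ux :: "nat \<Rightarrow> cpoly" where "ux m = (\<Sum>j<m. U m j * X m j)"

definition lap_x :: "nat \<Rightarrow> cpoly \<Rightarrow> cpoly" where
  "lap_x m P = (\<Sum>j<m. pderiv j (pderiv j P))"
definition lap_u :: "nat \<Rightarrow> cpoly \<Rightarrow> cpoly" where
  "lap_u m P = (\<Sum>j<m. pderiv (m + j) (pderiv (m + j) P))"
definition du_dx :: "nat \<Rightarrow> cpoly \<Rightarrow> cpoly" where
  "du_dx m P = (\<Sum>j<m. pderiv (m + j) (pderiv j P))"
definition x_du :: "nat \<Rightarrow> cpoly \<Rightarrow> cpoly" where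
  "x_du m P = (\<Sum>j<m. X m j * pderiv (m + j) P)"
definition u_dx :: "nat \<Rightarrow> cpoly \<Rightarrow> cpoly" where
  "u_dx m P = (\<Sum>j<m. U m j * pderiv j P)"

definition Pspace :: "nat \<Rightarrow> nat \<Rightarrow> nat \<Rightarrow> cpoly set" where
  "Pspace m p q = {P. \<forall>\<alpha>\<in>Poly_Mapping.keys P. Poly_Mapping.keys \<alpha> \<subseteq> {..<2*m}
      \<and> (\<Sum>j<m. Poly_Mapping.lookup \<alpha> j) = p \<and> (\<Sum>j<m. Poly_Mapping.lookup \<alpha> (m + j)) = q}"

definition Kerlap :: "nat \<Rightarrow> nat \<Rightarrow> nat \<Rightarrow> cpoly set" where
  "Kerlap m p q = {P \<in> Pspace m p q. lap_x m P = 0 \<and> lap_u m P = 0}"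

definition Harm :: "nat \<Rightarrow> nat \<Rightarrow> nat \<Rightarrow> cpoly set" where
  "Harm m a b = {P \<in> Pspace m a b. lap_x m P = 0 \<and> lap_u m P = 0
      \<and> du_dx m P = 0 \<and> x_du m P = 0}"

text \<open>\<pi>_s on P_{p,q}: the component H'_{p,q} of the unique decomposition
P = \<Sum>_{a,b} |x|^{2a} |u|^{2b} H'_{p-2a,q-2b}.\<close>
definition pis :: "nat \<Rightarrow> nat \<Rightarrow> nat \<Rightarrow> cpoly \<Rightarrow> cpoly" where
  "pis m p q P = (THE H. \<exists>Hs. (\<forall>a\<le>p div 2. \<forall>b\<le>q div 2. Hs a b \<in> Kerlap m (p - 2*a) (q - 2*b))
      \<and> P = (\<Sum>a\<le>p div 2. \<Sum>b\<le>q div 2. normx m ^ a * normu m ^ b * Hs a b)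
      \<and> H = Hs 0 0)"

fun su_iter :: "nat \<Rightarrow> nat \<Rightarrow> nat \<Rightarrow> nat \<Rightarrow> cpoly \<Rightarrow> cpoly" where
  "su_iter m 0 p0 q0 H = H"
| "su_iter m (Suc j) p0 q0 H = pis m (p0 - Suc j) (q0 + Suc j) (u_dx m (su_iter m j p0 q0 H))"

fun c_iter :: "nat \<Rightarrow> nat \<Rightarrow> nat \<Rightarrow> nat \<Rightarrow> cpoly \<Rightarrow> cpoly" where
  "c_iter m 0 p1 q1 H = H"
| "c_iter m (Suc i) p1 q1 H = pis m (p1 + Suc i) (q1 + Suc i) (ux m * c_iter m i p1 q1 H)"

definition Idx :: "nat \<Rightarrow> nat \<Rightarrow> (nat \<times> nat \<times> nat \<times> nat) set" where
  "Idx k l = {(a, b, i, j). 2*a \<le> k \<and> 2*b \<le> l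
      \<and> i \<le> min (k - 2*a) (l - 2*b) \<and> j \<le> min (k - 2*a) (l - 2*b) - i}"

definition Vsub :: "nat \<Rightarrow> nat \<Rightarrow> nat \<Rightarrow> nat \<times> nat \<times> nat \<times> nat \<Rightarrow> cpoly set" where
  "Vsub m k l t = (case t of (a, b, i, j) \<Rightarrow>
     (let p = k - 2*a; q = l - 2*b in
      {normx m ^ a * normu m ^ b *
         c_iter m i (p - i) (q - i) (su_iter m j (p - i + j) (q - i - j) H)
       | H. H \<in> Harm m (p - i + j) (q - i - j)}))"

end

theory Submission
  imports Defs
begin

text \<open>Multiplication by x_j (resp. u_j) is adjoint to \<partial>/\<partial>x_j (resp. \<partial>/\<partial>u_j)
for the Fischer product, which is positive definite. Hence |x|^2, |u|^2, \<langle>u,x\<rangle> and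
\<langle>u,\<partial>_x\<rangle> are adjoint to \<Delta>_x, \<Delta>_u, \<langle>\<partial>_u,\<partial>_x\<rangle> and \<langle>x,\<partial>_u\<rangle>.
Summands with different powers of |x|^2 or |u|^2 are orthogonal: moving the larger power to the
other side turns it into a power of the Laplacian, which kills the harmonic factor.

Positivity also shows that a harmonic polynomial in the ideal generated by |x|^2 and |u|^2
vanishes. This makes \<pi>_s computable and gives an explicit formula for C, from which
[F, C W] = [\<langle>\<partial>_u,\<partial>_x\<rangle> F, W] for harmonic F. Along a chain V_i = C^i S_u^j H, which
modulo the ideal is \<langle>u,x\<rangle>^i S_u^j H, the operator \<langle>\<partial>_u,\<partial>_x\<rangle> maps V_(i+1) to a
multiple of V_i. This separates different i and reduces equal i to the level of S_u, where
S_u^j H and S_u^j' H' are orthogonal for j < j' because \<langle>x,\<partial>_u\<rangle>^j' S_u^j H = 0.\<close>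

section \<open>Coefficients and partial derivatives\<close>

abbreviation lookup :: "('a \<Rightarrow>\<^sub>0 'b::zero) \<Rightarrow> 'a \<Rightarrow> 'b" where "lookup \<equiv> Poly_Mapping.lookup"
abbreviation unit_exp :: "nat \<Rightarrow> nat \<Rightarrow>\<^sub>0 nat" where "unit_exp i \<equiv> Poly_Mapping.single i 1"

lemma lookup_single_mult:
  "lookup (Poly_Mapping.single g c * (P::cpoly)) b =
     (if (\<exists>q. b = g + q) then c * lookup P (b - g) else 0)"
proof -
  have "lookup (Poly_Mapping.single g c * P) b =
     (\<Sum>l. lookup (Poly_Mapping.single g c) l * (\<Sum>q. lookup P q when b = l + q))"
    by (rule lookup_mult)
  also have "\<dots> = c * (\<Sum>q. lookup P q when b = g + q)"
  proof -
    have "(\<Sum>l. lookup (Poly_Mapping.single g c) l * (\<Sum>q. lookup P q when b = l + q))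
       = (\<Sum>l. (c * (\<Sum>q. lookup P q when b = l + q)) when g = l)"
      by (rule Sum_any.cong) (simp add: lookup_single when_def)
    also have "\<dots> = c * (\<Sum>q. lookup P q when b = g + q)" by simp
    finally show ?thesis .
  qed
  also have "\<dots> = (if (\<exists>q. b = g + q) then c * lookup P (b - g) else 0)"
  proof (cases "\<exists>q. b = g + q")
    case True
    then obtain q0 where q0: "b = g + q0" by blast
    have "(\<Sum>q. lookup P q when b = g + q) = (\<Sum>q. lookup P q0 when q = q0)"
      by (rule Sum_any.cong) (auto simp: q0 when_def)
    also have "\<dots> = lookup P q0" by simp
    finally show ?thesis using True q0 by simp
  next
    case False
    then show ?thesis by (simp add: when_def)
  qed
  finally show ?thesis .
qed

lemma ex_unit_exp_add_iff: "(\<exists>q. b = unit_exp i + q) \<longleftrightarrow> 0 < lookup b i"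
proof
  assume "\<exists>q. b = unit_exp i + q" then show "0 < lookup b i" by (auto simp: lookup_add)
next
  assume "0 < lookup b i"
  then have "b = unit_exp i + (b - unit_exp i)"
    by (intro poly_mapping_eqI) (auto simp: lookup_add lookup_minus lookup_single when_def)
  then show "\<exists>q. b = unit_exp i + q" by blast
qed

lemma lookup_var_mult:
  "lookup (var i * P) b = (if 0 < lookup b i then lookup P (b - unit_exp i) else 0)"
  unfolding var_def lookup_single_mult ex_unit_exp_add_iff by simp

lemma lookup_const_mult [simp]: "lookup (const c * P) b = c * lookup P b"
  unfolding const_def lookup_single_mult by simp

lemma add_unit_exp_diff_cancel [simp]: "(a + unit_exp i) - unit_exp i = a"
  by (rule poly_mapping_eqI) (simp add: lookup_add lookup_minus)
lemma diff_unit_exp_add_cancel: "0 < lookup a i \<Longrightarrow> a - unit_exp i + unit_exp i = a"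
  by (rule poly_mapping_eqI) (auto simp: lookup_add lookup_minus lookup_single when_def)
lemma lookup_diff_unit_exp: "lookup (a - unit_exp i) j = (if j = i then lookup a j - 1 else lookup a j)"
  by (auto simp: lookup_minus lookup_single when_def)
lemma lookup_add_unit_exp: "lookup (a + unit_exp i) j = (if j = i then lookup a j + 1 else lookup a j)"
  by (auto simp: lookup_add lookup_single when_def)

text \<open>The simplifier rewrites the exponent 1 of unit_exp to Suc 0, so these facts are also
needed in that form.\<close>

lemmas add_unit_exp_diff_cancel' [simp] = add_unit_exp_diff_cancel[unfolded One_nat_def]
lemmas diff_unit_exp_add_cancel' = diff_unit_exp_add_cancel[unfolded One_nat_def]
lemmas lookup_diff_unit_exp' = lookup_diff_unit_exp[unfolded One_nat_def]
lemmas lookup_add_unit_exp' = lookup_add_unit_exp[unfolded One_nat_def]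
lemmas unit_exp_simps = diff_unit_exp_add_cancel diff_unit_exp_add_cancel'
  lookup_diff_unit_exp lookup_diff_unit_exp' lookup_add_unit_exp lookup_add_unit_exp'

lemma lookup_pderiv:
  "lookup (pderiv i P) a = of_nat (lookup a i + 1) * lookup P (a + unit_exp i)"
proof -
  have eq: "(0 < lookup al i \<and> al - unit_exp i = a) \<longleftrightarrow> al = a + unit_exp i" for al :: "nat \<Rightarrow>\<^sub>0 nat"
  proof
    assume h: "0 < lookup al i \<and> al - unit_exp i = a"
    show "al = a + unit_exp i"
      using h by (intro poly_mapping_eqI) (auto simp: lookup_add lookup_minus lookup_single when_def)
  next
    assume "al = a + unit_exp i" then show "0 < lookup al i \<and> al - unit_exp i = a"
      by (auto simp: lookup_add intro!: poly_mapping_eqI simp: lookup_minus)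
  qed
  have "lookup (pderiv i P) a = (\<Sum>al\<in>Poly_Mapping.keys P. if al = a + unit_exp i
        then of_nat (lookup al i) * lookup P al else 0)"
    unfolding pderiv_def lookup_sum
    by (intro sum.cong refl) (use eq in \<open>auto simp: lookup_single when_def\<close>)
  also have "\<dots> = of_nat (lookup a i + 1) * lookup P (a + unit_exp i)"
    by (simp add: sum.delta unit_exp_simps in_keys_iff)
  finally show ?thesis .
qed

lemma pderiv_add [simp]: "pderiv i (P + Q) = pderiv i P + pderiv i Q"
  by (rule poly_mapping_eqI) (simp add: lookup_pderiv lookup_add algebra_simps)
lemma pderiv_diff [simp]: "pderiv i (P - Q) = pderiv i P - pderiv i Q"
  by (rule poly_mapping_eqI) (simp add: lookup_pderiv lookup_minus algebra_simps)
lemma pderiv_zero [simp]: "pderiv i 0 = 0"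
  by (rule poly_mapping_eqI) (simp add: lookup_pderiv)
lemma pderiv_const_mult [simp]: "pderiv i (const c * P) = const c * pderiv i P"
  by (rule poly_mapping_eqI) (simp add: lookup_pderiv)
lemma pderiv_sum [simp]: "pderiv i (sum F S) = (\<Sum>s\<in>S. pderiv i (F s))"
  by (induction S rule: infinite_finite_induct) auto
lemma pderiv_comm: "pderiv i (pderiv j P) = pderiv j (pderiv i P)"
  by (rule poly_mapping_eqI)
     (simp add: lookup_pderiv lookup_add lookup_single when_def ac_simps)

lemma pderiv_var_mult:
  "pderiv i (var j * P) = (if i = j then P else 0) + var j * pderiv i P"
proof (rule poly_mapping_eqI)
  fix a
  show "lookup (pderiv i (var j * P)) a = lookup ((if i = j then P else 0) + var j * pderiv i P) a"
  proof (cases "i = j")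
    case True
    have "lookup (pderiv i (var j * P)) a = of_nat (lookup a i + 1) * lookup P a"
      using True by (simp add: lookup_pderiv lookup_var_mult unit_exp_simps)
    moreover have "lookup (var j * pderiv i P) a = (if 0 < lookup a i then of_nat (lookup a i) * lookup P a else 0)"
      using True by (simp add: lookup_pderiv lookup_var_mult unit_exp_simps)
    ultimately show ?thesis using True by (simp add: lookup_add algebra_simps)
  next
    case False
    have e: "0 < lookup a j \<Longrightarrow> a + unit_exp i - unit_exp j = a - unit_exp j + unit_exp i"
      using False by (intro poly_mapping_eqI) (auto simp: lookup_add lookup_minus lookup_single when_def)
    show ?thesis using False
      by (auto simp: lookup_pderiv lookup_var_mult lookup_add unit_exp_simps e e[unfolded One_nat_def] lookup_single when_def)
  qed
qed

lemma const_mult_const [simp]: "const a * const b = const (a * b)"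
  by (simp add: const_def mult_single)
lemma const_add: "const (a + b) = const a + const b"
  by (simp add: const_def single_add)
lemma const_one [simp]: "const 1 = 1" by (simp add: const_def)
lemma const_zero [simp]: "const 0 = 0" by (simp add: const_def)
lemma numeral_const: "(numeral n :: cpoly) = const (numeral n)" by (simp add: const_def)
lemma of_nat_const: "(of_nat n :: cpoly) = const (of_nat n)" by (simp add: const_def)
lemma const_diff: "const (x - y) = const x - const y"
  by (simp add: const_def single_diff)
lemmas const_hom = const_add const_diff const_mult_const[symmetric] numeral_const[symmetric]
  of_nat_const[symmetric] const_one const_zero

lemma pderiv_numeral_mult [simp]: "pderiv i (numeral n * P) = numeral n * pderiv i P"
  by (simp add: numeral_const)
lemma pderiv_of_nat_mult [simp]: "pderiv i (of_nat n * P) = of_nat n * pderiv i P"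
  by (simp add: of_nat_const)

section \<open>The Fischer inner product\<close>

definition mono_fact :: "(nat \<Rightarrow>\<^sub>0 nat) \<Rightarrow> nat" where
  "mono_fact a = (\<Prod>j\<in>Poly_Mapping.keys a. fact (lookup a j))"

lemma mono_fact_superset:
  "finite K \<Longrightarrow> Poly_Mapping.keys a \<subseteq> K \<Longrightarrow> mono_fact a = (\<Prod>j\<in>K. fact (lookup a j))"
  unfolding mono_fact_def by (rule prod.mono_neutral_left) (auto simp: in_keys_iff)

lemma mono_fact_pos: "0 < mono_fact a"
  unfolding mono_fact_def by (simp add: prod_pos)

lemma mono_fact_add_unit_exp: "mono_fact (a + unit_exp i) = (lookup a i + 1) * mono_fact a"
proof -
  let ?K = "insert i (Poly_Mapping.keys a)"
  have k1: "Poly_Mapping.keys (a + unit_exp i) \<subseteq> ?K"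
    using keys_add[of a "unit_exp i"] by auto
  have "mono_fact (a + unit_exp i) = (\<Prod>j\<in>?K. fact (lookup (a + unit_exp i) j))"
    by (rule mono_fact_superset) (use k1 in auto)
  also have "\<dots> = fact (lookup a i + 1) * (\<Prod>j\<in>?K - {i}. fact (lookup (a + unit_exp i) j))"
    by (subst prod.remove[of _ i]) (auto simp: unit_exp_simps)
  also have "(\<Prod>j\<in>?K - {i}. fact (lookup (a + unit_exp i) j)) = (\<Prod>j\<in>?K - {i}. fact (lookup a j))"
    by (rule prod.cong) (auto simp: unit_exp_simps)
  also have "mono_fact a = fact (lookup a i) * (\<Prod>j\<in>?K - {i}. fact (lookup a j))"
  proof -
    have "mono_fact a = (\<Prod>j\<in>?K. fact (lookup a j))" by (rule mono_fact_superset) auto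
    also have "\<dots> = fact (lookup a i) * (\<Prod>j\<in>?K - {i}. fact (lookup a j))" by (rule prod.remove) auto
    finally show ?thesis .
  qed
  ultimately show ?thesis by (simp add: algebra_simps)
qed

lemma lookup_pderiv_funpow:
  "lookup ((pderiv i ^^ n) Q) b = pochhammer (of_nat (lookup b i) + 1) n * lookup Q (b + Poly_Mapping.single i n)"
proof (induction n arbitrary: b)
  case 0
  then show ?case by simp
next
  case (Suc n)
  have "lookup ((pderiv i ^^ Suc n) Q) b = of_nat (lookup b i + 1) * lookup ((pderiv i ^^ n) Q) (b + unit_exp i)"
    by (simp add: lookup_pderiv)
  also have "\<dots> = of_nat (lookup b i + 1) * (pochhammer (of_nat (lookup b i) + 2) n *
      lookup Q (b + unit_exp i + Poly_Mapping.single i n))"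
    by (simp add: Suc unit_exp_simps add_ac)
  also have "b + unit_exp i + Poly_Mapping.single i n = b + Poly_Mapping.single i (Suc n)"
    by (simp add: add.assoc single_add[symmetric])
  also have "of_nat (lookup b i + 1) * (pochhammer (of_nat (lookup b i) + 2) n * lookup Q (b + Poly_Mapping.single i (Suc n)))
      = pochhammer (of_nat (lookup b i) + 1) (Suc n) * lookup Q (b + Poly_Mapping.single i (Suc n))"
    by (simp add: pochhammer_rec add_ac)
  finally show ?case .
qed

lemma lookup_fold_pderiv:
  assumes "distinct ks"
  shows "lookup (fold (\<lambda>i R. (pderiv i ^^ lookup a i) R) ks Q) b =
     (\<Prod>i\<in>set ks. pochhammer (of_nat (lookup b i) + 1) (lookup a i)) *
     lookup Q (b + (\<Sum>i\<in>set ks. Poly_Mapping.single i (lookup a i)))"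
  using assms
proof (induction ks arbitrary: Q)
  case Nil
  then show ?case by simp
next
  case (Cons k ks)
  have nk: "k \<notin> set ks" using Cons.prems by simp
  let ?S = "(\<Sum>i\<in>set ks. Poly_Mapping.single i (lookup a i))"
  have Sk: "lookup (b + ?S) k = lookup b k"
    using nk by (simp add: lookup_add lookup_sum lookup_single when_def)
  have "lookup (fold (\<lambda>i R. (pderiv i ^^ lookup a i) R) (k # ks) Q) b =
     lookup (fold (\<lambda>i R. (pderiv i ^^ lookup a i) R) ks ((pderiv k ^^ lookup a k) Q)) b" by simp
  also have "\<dots> = (\<Prod>i\<in>set ks. pochhammer (of_nat (lookup b i) + 1) (lookup a i)) *
     lookup ((pderiv k ^^ lookup a k) Q) (b + ?S)"
    using Cons by simp
  also have "\<dots> = (\<Prod>i\<in>set ks. pochhammer (of_nat (lookup b i) + 1) (lookup a i)) *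
     (pochhammer (of_nat (lookup b k) + 1) (lookup a k) * lookup Q (b + ?S + Poly_Mapping.single k (lookup a k)))"
    by (simp add: lookup_pderiv_funpow Sk)
  also have "b + ?S + Poly_Mapping.single k (lookup a k) = b + (\<Sum>i\<in>set (k#ks). Poly_Mapping.single i (lookup a i))"
    using nk by (simp add: add_ac)
  finally show ?case using nk by (simp add: ac_simps)
qed

lemma sum_single_keys: "(\<Sum>i\<in>Poly_Mapping.keys a. Poly_Mapping.single i (lookup a i)) = a"
  by (rule poly_mapping_eqI) (simp add: lookup_sum lookup_single when_def in_keys_iff sum.delta)

lemma lookup_dmono_0: "lookup (dmono a Q) 0 = of_nat (mono_fact a) * lookup Q a"
proof -
  have "lookup (dmono a Q) 0 = (\<Prod>i\<in>Poly_Mapping.keys a. pochhammer 1 (lookup a i)) * lookup Q a"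
    unfolding dmono_def
    by (subst lookup_fold_pderiv) (simp_all add: sum_single_keys)
  also have "(\<Prod>i\<in>Poly_Mapping.keys a. pochhammer (1::complex) (lookup a i)) = of_nat (mono_fact a)"
    by (simp add: mono_fact_def of_nat_prod flip: pochhammer_fact)
  finally show ?thesis .
qed

lemma fischer_eq_sum_keys: "fischer P Q = (\<Sum>a\<in>Poly_Mapping.keys P. cnj (lookup P a) * of_nat (mono_fact a) * lookup Q a)"
  unfolding fischer_def lookup_sum by (simp add: lookup_dmono_0 mult.assoc)

lemma fischer_eq_sum_superset:
  assumes "finite S" "Poly_Mapping.keys P \<subseteq> S"
  shows "fischer P Q = (\<Sum>a\<in>S. cnj (lookup P a) * of_nat (mono_fact a) * lookup Q a)"
  unfolding fischer_eq_sum_keys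
  by (rule sum.mono_neutral_left) (use assms in \<open>auto simp: in_keys_iff\<close>)

lemma fischer_swap: "fischer Q P = cnj (fischer P Q)"
proof -
  let ?S = "Poly_Mapping.keys P \<union> Poly_Mapping.keys Q"
  show ?thesis
    by (simp add: fischer_eq_sum_superset[of ?S P] fischer_eq_sum_superset[of ?S Q] ac_simps)
qed

lemma fischer_add_left: "fischer (P + P') Q = fischer P Q + fischer P' Q"
proof -
  let ?S = "Poly_Mapping.keys P \<union> Poly_Mapping.keys P'"
  have "Poly_Mapping.keys (P + P') \<subseteq> ?S" by (rule keys_add)
  then show ?thesis
    by (simp add: fischer_eq_sum_superset[of ?S] lookup_add algebra_simps sum.distrib)
qed

lemma fischer_add_right: "fischer P (Q + Q') = fischer P Q + fischer P Q'"
  by (metis fischer_swap fischer_add_left complex_cnj_add)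

lemma fischer_const_left: "fischer (const c * P) Q = cnj c * fischer P Q"
proof -
  let ?S = "Poly_Mapping.keys P"
  have "Poly_Mapping.keys (const c * P) \<subseteq> ?S" by (auto simp: in_keys_iff)
  then show ?thesis
    by (simp add: fischer_eq_sum_superset[of ?S] sum_distrib_left) (simp add: ac_simps)
qed

lemma fischer_const_right: "fischer P (const c * Q) = c * fischer P Q"
  by (metis fischer_swap fischer_const_left complex_cnj_mult complex_cnj_cnj)

lemma fischer_zero_left [simp]: "fischer 0 Q = 0"
  by (simp add: fischer_eq_sum_keys)
lemma fischer_zero_right [simp]: "fischer P 0 = 0"
  by (simp add: fischer_eq_sum_keys)

lemma uminus_eq_const_mult: "- P = const (-1) * P"
  by (rule poly_mapping_eqI) simp
lemma fischer_uminus_right: "fischer P (- Q) = - fischer P Q"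
  using fischer_const_right[of P "-1" Q] by (simp add: uminus_eq_const_mult[symmetric])
lemma fischer_diff_right: "fischer P (Q - Q') = fischer P Q - fischer P Q'"
  using fischer_add_right[of P Q "-Q'"] by (simp add: fischer_uminus_right)

lemma fischer_sum_left: "fischer (sum F S) Q = (\<Sum>s\<in>S. fischer (F s) Q)"
  by (induction S rule: infinite_finite_induct) (auto simp: fischer_add_left)
lemma fischer_sum_right: "fischer P (sum F S) = (\<Sum>s\<in>S. fischer P (F s))"
  by (induction S rule: infinite_finite_induct) (auto simp: fischer_add_right)

lemma fischer_self_eq_sum_norm: "fischer P P = of_real (\<Sum>a\<in>Poly_Mapping.keys P. real (mono_fact a) * (cmod (lookup P a))\<^sup>2)"
proof -
  have key: "cnj z * of_nat n * z = of_real (real n * (cmod z)\<^sup>2)" for z :: complex and n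
  proof -
    have "cnj z * of_nat n * z = of_nat n * (z * cnj z)" by (simp add: ac_simps)
    also have "\<dots> = of_real (real n * (cmod z)\<^sup>2)" by (simp add: complex_norm_square[symmetric])
    finally show ?thesis .
  qed
  show ?thesis unfolding fischer_eq_sum_keys of_real_sum
    by (rule sum.cong[OF refl]) (rule key)
qed

lemma fischer_self_eq_0_iff: "fischer P P = 0 \<longleftrightarrow> P = 0"
proof
  assume "fischer P P = 0"
  then have "(\<Sum>a\<in>Poly_Mapping.keys P. real (mono_fact a) * (cmod (lookup P a))\<^sup>2) = 0"
    by (simp only: fischer_self_eq_sum_norm of_real_eq_0_iff)
  then have "\<forall>a\<in>Poly_Mapping.keys P. real (mono_fact a) * (cmod (lookup P a))\<^sup>2 = 0"
    by (simp add: sum_nonneg_eq_0_iff)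
  then have "lookup P a = 0" for a
    using mono_fact_pos[of a] by (cases "a \<in> Poly_Mapping.keys P") (auto simp: in_keys_iff)
  then show "P = 0"
    by (intro poly_mapping_eqI) simp
qed simp

lemma keys_var_mult: "Poly_Mapping.keys (var i * P) = (\<lambda>a. a + unit_exp i) ` Poly_Mapping.keys P"
proof
  show "Poly_Mapping.keys (var i * P) \<subseteq> (\<lambda>a. a + unit_exp i) ` Poly_Mapping.keys P"
  proof
    fix b assume "b \<in> Poly_Mapping.keys (var i * P)"
    then have "0 < lookup b i" "b - unit_exp i \<in> Poly_Mapping.keys P"
      by (auto simp: in_keys_iff lookup_var_mult split: if_splits)
    then show "b \<in> (\<lambda>a. a + unit_exp i) ` Poly_Mapping.keys P"
      by (intro image_eqI[of _ _ "b - unit_exp i"]) (auto simp: unit_exp_simps)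
  qed
next
  show "(\<lambda>a. a + unit_exp i) ` Poly_Mapping.keys P \<subseteq> Poly_Mapping.keys (var i * P)"
    by (auto simp: in_keys_iff lookup_var_mult unit_exp_simps lookup_add)
qed

lemma fischer_var_left: "fischer (var i * P) Q = fischer P (pderiv i Q)"
proof -
  have inj: "inj_on (\<lambda>a. a + unit_exp i) (Poly_Mapping.keys P)"
    by (auto simp: inj_on_def)
  have "fischer (var i * P) Q = (\<Sum>b\<in>(\<lambda>a. a + unit_exp i) ` Poly_Mapping.keys P.
          cnj (lookup (var i * P) b) * of_nat (mono_fact b) * lookup Q b)"
    by (simp add: fischer_eq_sum_keys keys_var_mult)
  also have "\<dots> = (\<Sum>a\<in>Poly_Mapping.keys P.
      cnj (lookup P a) * of_nat (mono_fact (a + unit_exp i)) * lookup Q (a + unit_exp i))"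
    by (subst sum.reindex[OF inj]) (simp add: lookup_var_mult unit_exp_simps lookup_add)
  also have "\<dots> = fischer P (pderiv i Q)"
    by (simp add: fischer_eq_sum_keys lookup_pderiv mono_fact_add_unit_exp
        mono_fact_add_unit_exp[unfolded One_nat_def]) (simp add: algebra_simps)
  finally show ?thesis .
qed

lemma fischer_var_right: "fischer P (var i * Q) = fischer (pderiv i P) Q"
  by (metis fischer_swap fischer_var_left)

section \<open>Euler operators and commutation relations\<close>

definition euler_x :: "nat \<Rightarrow> cpoly \<Rightarrow> cpoly" where "euler_x m P = (\<Sum>j<m. var j * pderiv j P)"
definition euler_u :: "nat \<Rightarrow> cpoly \<Rightarrow> cpoly" where "euler_u m P = (\<Sum>j<m. var (m + j) * pderiv (m + j) P)"

lemma lap_x_add [simp]: "lap_x m (P + Q) = lap_x m P + lap_x m Q"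
  by (simp add: lap_x_def sum.distrib)
lemma lap_u_add [simp]: "lap_u m (P + Q) = lap_u m P + lap_u m Q"
  by (simp add: lap_u_def sum.distrib)
lemma du_dx_add [simp]: "du_dx m (P + Q) = du_dx m P + du_dx m Q"
  by (simp add: du_dx_def sum.distrib)
lemma x_du_add [simp]: "x_du m (P + Q) = x_du m P + x_du m Q"
  by (simp add: x_du_def sum.distrib distrib_left)
lemma u_dx_add [simp]: "u_dx m (P + Q) = u_dx m P + u_dx m Q"
  by (simp add: u_dx_def sum.distrib distrib_left)
lemma lap_x_diff [simp]: "lap_x m (P - Q) = lap_x m P - lap_x m Q"
  by (simp add: lap_x_def sum_subtractf)
lemma lap_u_diff [simp]: "lap_u m (P - Q) = lap_u m P - lap_u m Q"
  by (simp add: lap_u_def sum_subtractf)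
lemma du_dx_diff [simp]: "du_dx m (P - Q) = du_dx m P - du_dx m Q"
  by (simp add: du_dx_def sum_subtractf)
lemma x_du_diff [simp]: "x_du m (P - Q) = x_du m P - x_du m Q"
  by (simp add: x_du_def sum_subtractf right_diff_distrib)
lemma u_dx_diff [simp]: "u_dx m (P - Q) = u_dx m P - u_dx m Q"
  by (simp add: u_dx_def sum_subtractf right_diff_distrib)

lemma lap_x_const [simp]: "lap_x m (const c * P) = const c * lap_x m P"
  by (simp add: lap_x_def sum_distrib_left)
lemma lap_u_const [simp]: "lap_u m (const c * P) = const c * lap_u m P"
  by (simp add: lap_u_def sum_distrib_left)
lemma du_dx_const [simp]: "du_dx m (const c * P) = const c * du_dx m P"
  by (simp add: du_dx_def sum_distrib_left)
lemma x_du_const [simp]: "x_du m (const c * P) = const c * x_du m P"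
  by (simp add: x_du_def sum_distrib_left mult.left_commute)
lemma u_dx_const [simp]: "u_dx m (const c * P) = const c * u_dx m P"
  by (simp add: u_dx_def sum_distrib_left mult.left_commute)
lemma lap_x_zero [simp]: "lap_x m 0 = 0" by (simp add: lap_x_def)
lemma lap_u_zero [simp]: "lap_u m 0 = 0" by (simp add: lap_u_def)
lemma du_dx_zero [simp]: "du_dx m 0 = 0" by (simp add: du_dx_def)
lemma x_du_zero [simp]: "x_du m 0 = 0" by (simp add: x_du_def)
lemma u_dx_zero [simp]: "u_dx m 0 = 0" by (simp add: u_dx_def)

lemma du_dx_num [simp]: "du_dx m (numeral n * P) = numeral n * du_dx m P"
  by (simp add: numeral_const)
lemma x_du_num [simp]: "x_du m (numeral n * P) = numeral n * x_du m P"
  by (simp add: numeral_const)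
lemma u_dx_num [simp]: "u_dx m (numeral n * P) = numeral n * u_dx m P"
  by (simp add: numeral_const)

lemma radial_mult_const_commute: "normx m * (const c * Q) = const c * (normx m * Q)"
  "normu m * (const c * Q) = const c * (normu m * Q)"
  "ux m * (const c * Q) = const c * (ux m * Q)"
  "normx m ^ a * (const c * Q) = const c * (normx m ^ a * Q)"
  "normu m ^ a * (const c * Q) = const c * (normu m ^ a * Q)"
  by (simp_all add: mult.left_commute)
lemma const_mult_const_mult: "const a * (const b * P) = const (a * b) * P"
  by (simp add: mult.assoc[symmetric])
lemmas const_simps = radial_mult_const_commute const_mult_const_mult of_nat_const numeral_const

lemma index_x_neq_u [simp]: "(j::nat) < m \<Longrightarrow> j \<noteq> m + k" by arith
lemma index_u_neq_x [simp]: "(j::nat) < m \<Longrightarrow> m + k \<noteq> j" by arith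

lemma sum_lessThan_delta:
  "(\<Sum>j<(m::nat). if i = j then f j else 0) = (if i < m then f i else (0::'a::comm_monoid_add))"
  by (simp add: sum.delta')
lemma sum_lessThan_delta_shift:
  "(\<Sum>j<(m::nat). if i = m + j then f j else 0)
    = (if m \<le> i \<and> i < 2 * m then f (i - m) else (0::'a::comm_monoid_add))"
proof (cases "m \<le> i \<and> i < 2 * m")
  case True
  then have "(\<Sum>j<m. (if i = m + j then f j else 0)) = (\<Sum>j<m. (if j = i - m then f (i - m) else 0))"
    by (intro sum.cong) auto
  moreover have "i - m < m" using True by arith
  ultimately show ?thesis using True by simp
next
  case False
  have "(\<Sum>j<m. if i = m + j then f j else 0) = 0" by (rule sum.neutral) (use False in auto)
  then show ?thesis using False by (simp only: if_False)
qed

lemma normx_eq_sum_var: "normx m = (\<Sum>j<m. var j * var j)"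
  by (simp add: normx_def X_def power2_eq_square)
lemma normu_eq_sum_var: "normu m = (\<Sum>j<m. var (m + j) * var (m + j))"
  by (simp add: normu_def U_def power2_eq_square)
lemma ux_eq_sum_var: "ux m = (\<Sum>j<m. var (m + j) * var j)"
  by (simp add: ux_def U_def X_def)

lemma pderiv_var_var_mult: "pderiv i (var a * (var b * P)) = (if i = a then var b * P else 0) + (if i = b then var a * P else 0)
   + var a * (var b * pderiv i P)"
  by (simp add: pderiv_var_mult distrib_left)

lemma pderiv_normx_mult: "pderiv i (normx m * P) = (if i < m then 2 * (var i * P) else 0) + normx m * pderiv i P"
proof -
  have "normx m * P = (\<Sum>j<m. var j * (var j * P))" by (simp add: normx_eq_sum_var sum_distrib_right mult.assoc)
  then have "pderiv i (normx m * P) = (\<Sum>j<m. (if i = j then var j * P else 0) + (if i = j then var j * P else 0)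
   + var j * (var j * pderiv i P))" by (simp add: pderiv_var_var_mult)
  also have "\<dots> = (if i < m then var i * P else 0) + (if i < m then var i * P else 0) + normx m * pderiv i P"
    unfolding sum.distrib sum_lessThan_delta by (simp add: normx_eq_sum_var sum_distrib_right mult.assoc)
  finally show ?thesis unfolding mult_2 by simp
qed

lemma pderiv_normu_mult: "pderiv i (normu m * P) = (if m \<le> i \<and> i < 2 * m then 2 * (var i * P) else 0) + normu m * pderiv i P"
proof -
  have "normu m * P = (\<Sum>j<m. var (m + j) * (var (m + j) * P))" by (simp add: normu_eq_sum_var sum_distrib_right mult.assoc)
  then have "pderiv i (normu m * P) = (\<Sum>j<m. (if i = m + j then var (m + j) * P else 0) + (if i = m + j then var (m + j) * P else 0)
   + var (m + j) * (var (m + j) * pderiv i P))" by (simp add: pderiv_var_var_mult)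
  also have "\<dots> = (if m \<le> i \<and> i < 2 * m then var (m + (i - m)) * P else 0) + (if m \<le> i \<and> i < 2 * m then var (m + (i - m)) * P else 0) + normu m * pderiv i P"
    unfolding sum.distrib sum_lessThan_delta_shift by (simp add: normu_eq_sum_var sum_distrib_right mult.assoc)
  finally show ?thesis unfolding mult_2 by simp
qed

lemma pderiv_ux_mult: "pderiv i (ux m * P) = (if i < m then var (m + i) * P else 0)
   + (if m \<le> i \<and> i < 2 * m then var (i - m) * P else 0) + ux m * pderiv i P"
proof -
  have "ux m * P = (\<Sum>j<m. var (m + j) * (var j * P))" by (simp add: ux_eq_sum_var sum_distrib_right mult.assoc)
  then have "pderiv i (ux m * P) = (\<Sum>j<m. (if i = m + j then var j * P else 0) + (if i = j then var (m + j) * P else 0)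
   + var (m + j) * (var j * pderiv i P))" by (simp add: pderiv_var_var_mult)
  also have "\<dots> = (if m \<le> i \<and> i < 2 * m then var (i - m) * P else 0) + (if i < m then var (m + i) * P else 0) + ux m * pderiv i P"
    unfolding sum.distrib sum_lessThan_delta sum_lessThan_delta_shift by (simp add: ux_eq_sum_var sum_distrib_right mult.assoc)
  finally show ?thesis by (simp add: ac_simps)
qed

lemma pderiv_x_normx_mult: "i < m \<Longrightarrow> pderiv i (normx m * P) = 2 * (var i * P) + normx m * pderiv i P"
  by (simp add: pderiv_normx_mult)
lemma pderiv_x_normu_mult: "i < m \<Longrightarrow> pderiv i (normu m * P) = normu m * pderiv i P"
  by (simp add: pderiv_normu_mult)
lemma pderiv_x_ux_mult: "i < m \<Longrightarrow> pderiv i (ux m * P) = var (m + i) * P + ux m * pderiv i P"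
  by (simp add: pderiv_ux_mult)
lemma pderiv_u_normx_mult: "i < m \<Longrightarrow> pderiv (m + i) (normx m * P) = normx m * pderiv (m + i) P"
  by (simp add: pderiv_normx_mult)
lemma pderiv_u_normu_mult: "i < m \<Longrightarrow> pderiv (m + i) (normu m * P) = 2 * (var (m + i) * P) + normu m * pderiv (m + i) P"
  by (simp add: pderiv_normu_mult)
lemma pderiv_u_ux_mult: "i < m \<Longrightarrow> pderiv (m + i) (ux m * P) = var i * P + ux m * pderiv (m + i) P"
  by (simp add: pderiv_ux_mult)

lemma pderiv_var_mult_same: "pderiv i (var i * P) = P + var i * pderiv i P"
  by (simp add: pderiv_var_mult)
lemma pderiv_x_var_u_mult: "i < m \<Longrightarrow> pderiv i (var (m + j) * P) = var (m + j) * pderiv i P"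
  by (simp add: pderiv_var_mult)
lemma pderiv_u_var_x_mult: "j < m \<Longrightarrow> pderiv (m + i) (var j * P) = var j * pderiv (m + i) P"
  by (simp add: pderiv_var_mult)

lemmas pderiv_radial_mult_simps = pderiv_x_normx_mult pderiv_x_normu_mult pderiv_x_ux_mult
  pderiv_u_normx_mult pderiv_u_normu_mult pderiv_u_ux_mult

lemma lap_x_normx_mult: "lap_x m (normx m * P) = 2 * of_nat m * P + 4 * euler_x m P + normx m * lap_x m P"
proof -
  have "lap_x m (normx m * P) = (\<Sum>j<m. 2 * P + 4 * (var j * pderiv j P) + normx m * pderiv j (pderiv j P))"
    unfolding lap_x_def by (rule sum.cong[OF refl]) (simp add: pderiv_radial_mult_simps pderiv_var_mult_same; simp add: algebra_simps)
  also have "\<dots> = 2 * of_nat m * P + 4 * euler_x m P + normx m * lap_x m P"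
    by (simp add: sum.distrib euler_x_def lap_x_def sum_distrib_left)
  finally show ?thesis .
qed

lemma lap_x_normu_mult: "lap_x m (normu m * P) = normu m * lap_x m P"
  unfolding lap_x_def sum_distrib_left by (rule sum.cong[OF refl]) (simp add: pderiv_radial_mult_simps)
lemma lap_u_normx_mult: "lap_u m (normx m * P) = normx m * lap_u m P"
  unfolding lap_u_def sum_distrib_left by (rule sum.cong[OF refl]) (simp add: pderiv_radial_mult_simps)

lemma lap_u_normu_mult: "lap_u m (normu m * P) = 2 * of_nat m * P + 4 * euler_u m P + normu m * lap_u m P"
proof -
  have "lap_u m (normu m * P) = (\<Sum>j<m. 2 * P + 4 * (var (m + j) * pderiv (m + j) P) + normu m * pderiv (m + j) (pderiv (m + j) P))"
    unfolding lap_u_def by (rule sum.cong[OF refl]) (simp add: pderiv_radial_mult_simps pderiv_var_mult_same; simp add: algebra_simps)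
  also have "\<dots> = 2 * of_nat m * P + 4 * euler_u m P + normu m * lap_u m P"
    by (simp add: sum.distrib euler_u_def lap_u_def sum_distrib_left)
  finally show ?thesis .
qed

lemma lap_x_ux_mult: "lap_x m (ux m * P) = 2 * u_dx m P + ux m * lap_x m P"
proof -
  have "lap_x m (ux m * P) = (\<Sum>j<m. 2 * (var (m + j) * pderiv j P) + ux m * pderiv j (pderiv j P))"
    unfolding lap_x_def by (rule sum.cong[OF refl]) (simp add: pderiv_radial_mult_simps pderiv_x_var_u_mult; simp add: algebra_simps)
  also have "\<dots> = 2 * u_dx m P + ux m * lap_x m P"
    by (simp add: sum.distrib u_dx_def U_def lap_x_def sum_distrib_left)
  finally show ?thesis .
qed

lemma lap_u_ux_mult: "lap_u m (ux m * P) = 2 * x_du m P + ux m * lap_u m P"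
proof -
  have "lap_u m (ux m * P) = (\<Sum>j<m. 2 * (var j * pderiv (m + j) P) + ux m * pderiv (m + j) (pderiv (m + j) P))"
    unfolding lap_u_def by (rule sum.cong[OF refl]) (simp add: pderiv_radial_mult_simps pderiv_u_var_x_mult; simp add: algebra_simps)
  also have "\<dots> = 2 * x_du m P + ux m * lap_u m P"
    by (simp add: sum.distrib x_du_def X_def lap_u_def sum_distrib_left)
  finally show ?thesis .
qed

lemma du_dx_normx_mult: "du_dx m (normx m * P) = normx m * du_dx m P + 2 * x_du m P"
proof -
  have "du_dx m (normx m * P) = (\<Sum>j<m. normx m * pderiv (m + j) (pderiv j P) + 2 * (var j * pderiv (m + j) P))"
    unfolding du_dx_def by (rule sum.cong[OF refl]) (simp add: pderiv_radial_mult_simps pderiv_u_var_x_mult; simp add: algebra_simps)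
  also have "\<dots> = normx m * du_dx m P + 2 * x_du m P"
    by (simp add: sum.distrib x_du_def X_def du_dx_def sum_distrib_left)
  finally show ?thesis .
qed

lemma du_dx_normu_mult: "du_dx m (normu m * P) = normu m * du_dx m P + 2 * u_dx m P"
proof -
  have "du_dx m (normu m * P) = (\<Sum>j<m. normu m * pderiv (m + j) (pderiv j P) + 2 * (var (m + j) * pderiv j P))"
    unfolding du_dx_def by (rule sum.cong[OF refl]) (simp add: pderiv_radial_mult_simps; simp add: algebra_simps)
  also have "\<dots> = normu m * du_dx m P + 2 * u_dx m P"
    by (simp add: sum.distrib u_dx_def U_def du_dx_def sum_distrib_left)
  finally show ?thesis .
qed

lemma du_dx_ux_mult: "du_dx m (ux m * P) = of_nat m * P + euler_x m P + euler_u m P + ux m * du_dx m P"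
proof -
  have "du_dx m (ux m * P) = (\<Sum>j<m. P + var (m + j) * pderiv (m + j) P + var j * pderiv j P + ux m * pderiv (m + j) (pderiv j P))"
    unfolding du_dx_def
    by (rule sum.cong[OF refl])
      (simp add: pderiv_radial_mult_simps pderiv_var_mult_same pderiv_u_var_x_mult;
        simp add: algebra_simps)
  also have "\<dots> = of_nat m * P + euler_x m P + euler_u m P + ux m * du_dx m P"
    by (simp add: sum.distrib euler_x_def euler_u_def du_dx_def sum_distrib_left)
  finally show ?thesis .
qed

lemma x_du_normx_mult: "x_du m (normx m * P) = normx m * x_du m P"
  unfolding x_du_def X_def sum_distrib_left by (rule sum.cong[OF refl]) (simp add: pderiv_radial_mult_simps; simp add: algebra_simps)
lemma x_du_normu_mult: "x_du m (normu m * P) = 2 * (ux m * P) + normu m * x_du m P"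
proof -
  have "x_du m (normu m * P) = (\<Sum>j<m. 2 * (var (m + j) * var j * P) + normu m * (var j * pderiv (m + j) P))"
    unfolding x_du_def X_def by (rule sum.cong[OF refl]) (simp add: pderiv_radial_mult_simps; simp add: algebra_simps)
  also have "\<dots> = 2 * (ux m * P) + normu m * x_du m P"
    by (simp add: sum.distrib x_du_def X_def ux_eq_sum_var sum_distrib_left sum_distrib_right)
  finally show ?thesis .
qed
lemma x_du_ux_mult: "x_du m (ux m * P) = normx m * P + ux m * x_du m P"
proof -
  have "x_du m (ux m * P) = (\<Sum>j<m. var j * var j * P + ux m * (var j * pderiv (m + j) P))"
    unfolding x_du_def X_def by (rule sum.cong[OF refl]) (simp add: pderiv_radial_mult_simps; simp add: algebra_simps)
  also have "\<dots> = normx m * P + ux m * x_du m P"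
    by (simp add: sum.distrib x_du_def X_def normx_eq_sum_var sum_distrib_left sum_distrib_right)
  finally show ?thesis .
qed
lemma u_dx_normx_mult: "u_dx m (normx m * P) = 2 * (ux m * P) + normx m * u_dx m P"
proof -
  have "u_dx m (normx m * P) = (\<Sum>j<m. 2 * (var (m + j) * var j * P) + normx m * (var (m + j) * pderiv j P))"
    unfolding u_dx_def U_def by (rule sum.cong[OF refl]) (simp add: pderiv_radial_mult_simps; simp add: algebra_simps)
  also have "\<dots> = 2 * (ux m * P) + normx m * u_dx m P"
    by (simp add: sum.distrib u_dx_def U_def ux_eq_sum_var sum_distrib_left sum_distrib_right)
  finally show ?thesis .
qed
lemma u_dx_normu_mult: "u_dx m (normu m * P) = normu m * u_dx m P"
  unfolding u_dx_def U_def sum_distrib_left by (rule sum.cong[OF refl]) (simp add: pderiv_radial_mult_simps; simp add: algebra_simps)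
lemma u_dx_ux_mult: "u_dx m (ux m * P) = normu m * P + ux m * u_dx m P"
proof -
  have "u_dx m (ux m * P) = (\<Sum>j<m. var (m + j) * var (m + j) * P + ux m * (var (m + j) * pderiv j P))"
    unfolding u_dx_def U_def by (rule sum.cong[OF refl]) (simp add: pderiv_radial_mult_simps; simp add: algebra_simps)
  also have "\<dots> = normu m * P + ux m * u_dx m P"
    by (simp add: sum.distrib u_dx_def U_def normu_eq_sum_var sum_distrib_left sum_distrib_right)
  finally show ?thesis .
qed

lemma pderiv_rotate: "pderiv a (pderiv b (pderiv c P)) = pderiv c (pderiv a (pderiv b P))"
  by (metis pderiv_comm)

lemma sum_diagonal_delta: "(\<Sum>j<(m::nat). \<Sum>k<m. if j = k then f j k else 0) = (\<Sum>j<m. f j j)"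
  by (rule sum.cong[OF refl]) (simp add: sum.delta)

lemma lap_x_u_dx: "lap_x m (u_dx m P) = u_dx m (lap_x m P)"
proof -
  have "lap_x m (u_dx m P) = (\<Sum>j<m. \<Sum>k<m. var (m + k) * pderiv k (pderiv j (pderiv j P)))"
    unfolding lap_x_def u_dx_def U_def pderiv_sum
    by (intro sum.cong refl) (simp add: pderiv_x_var_u_mult pderiv_rotate)
  also have "\<dots> = u_dx m (lap_x m P)"
    unfolding u_dx_def U_def lap_x_def pderiv_sum sum_distrib_left by (rule sum.swap)
  finally show ?thesis .
qed

lemma lap_u_x_du: "lap_u m (x_du m P) = x_du m (lap_u m P)"
proof -
  have "lap_u m (x_du m P) = (\<Sum>j<m. \<Sum>k<m. var k * pderiv (m + k) (pderiv (m + j) (pderiv (m + j) P)))"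
    unfolding lap_u_def x_du_def X_def pderiv_sum
    by (intro sum.cong refl) (simp add: pderiv_u_var_x_mult pderiv_rotate)
  also have "\<dots> = x_du m (lap_u m P)"
    unfolding x_du_def X_def lap_u_def pderiv_sum sum_distrib_left by (rule sum.swap)
  finally show ?thesis .
qed

lemma lap_u_u_dx: "lap_u m (u_dx m P) = u_dx m (lap_u m P) + 2 * du_dx m P"
proof -
  have "lap_u m (u_dx m P) = (\<Sum>j<m. \<Sum>k<m. (if j = k then pderiv (m + j) (pderiv k P) + pderiv (m + j) (pderiv k P) else 0)
      + var (m + k) * pderiv k (pderiv (m + j) (pderiv (m + j) P)))"
    unfolding lap_u_def u_dx_def U_def pderiv_sum
    by (intro sum.cong refl) (simp add: pderiv_var_mult pderiv_rotate)
  also have "\<dots> = (\<Sum>j<m. \<Sum>k<m. (if j = k then pderiv (m + j) (pderiv k P) + pderiv (m + j) (pderiv k P) else 0))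
      + (\<Sum>j<m. \<Sum>k<m. var (m + k) * pderiv k (pderiv (m + j) (pderiv (m + j) P)))"
    by (simp only: sum.distrib)
  also have "(\<Sum>j<m. \<Sum>k<m. (if j = k then pderiv (m + j) (pderiv k P) + pderiv (m + j) (pderiv k P) else 0)) = 2 * du_dx m P"
    unfolding mult_2 by (simp only: sum_diagonal_delta du_dx_def sum.distrib)
  also have "(\<Sum>j<m. \<Sum>k<m. var (m + k) * pderiv k (pderiv (m + j) (pderiv (m + j) P))) = u_dx m (lap_u m P)"
    unfolding u_dx_def U_def lap_u_def pderiv_sum sum_distrib_left by (rule sum.swap)
  finally show ?thesis by (simp add: add.commute)
qed

lemma lap_x_x_du: "lap_x m (x_du m P) = x_du m (lap_x m P) + 2 * du_dx m P"
proof -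
  have "lap_x m (x_du m P) = (\<Sum>j<m. \<Sum>k<m. (if j = k then pderiv (m + j) (pderiv k P) + pderiv (m + j) (pderiv k P) else 0)
      + var k * pderiv (m + k) (pderiv j (pderiv j P)))"
    unfolding lap_x_def x_du_def X_def pderiv_sum
    by (intro sum.cong refl) (auto simp add: pderiv_var_mult pderiv_rotate intro: pderiv_comm)
  also have "\<dots> = (\<Sum>j<m. \<Sum>k<m. (if j = k then pderiv (m + j) (pderiv k P) + pderiv (m + j) (pderiv k P) else 0))
      + (\<Sum>j<m. \<Sum>k<m. var k * pderiv (m + k) (pderiv j (pderiv j P)))"
    by (simp only: sum.distrib)
  also have "(\<Sum>j<m. \<Sum>k<m. (if j = k then pderiv (m + j) (pderiv k P) + pderiv (m + j) (pderiv k P) else 0)) = 2 * du_dx m P"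
    unfolding mult_2 by (simp only: sum_diagonal_delta du_dx_def sum.distrib)
  also have "(\<Sum>j<m. \<Sum>k<m. var k * pderiv (m + k) (pderiv j (pderiv j P))) = x_du m (lap_x m P)"
    unfolding x_du_def X_def lap_x_def pderiv_sum sum_distrib_left by (rule sum.swap)
  finally show ?thesis by (simp add: add.commute)
qed

lemma du_dx_u_dx: "du_dx m (u_dx m P) = u_dx m (du_dx m P) + lap_x m P"
proof -
  have "du_dx m (u_dx m P) = (\<Sum>j<m. \<Sum>k<m. (if j = k then pderiv j (pderiv k P) else 0)
      + var (m + k) * pderiv k (pderiv (m + j) (pderiv j P)))"
    unfolding du_dx_def u_dx_def U_def pderiv_sum
    by (intro sum.cong refl) (auto simp add: pderiv_var_mult pderiv_rotate intro: pderiv_comm)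
  also have "\<dots> = (\<Sum>j<m. \<Sum>k<m. (if j = k then pderiv j (pderiv k P) else 0))
      + (\<Sum>j<m. \<Sum>k<m. var (m + k) * pderiv k (pderiv (m + j) (pderiv j P)))"
    by (simp only: sum.distrib)
  also have "(\<Sum>j<m. \<Sum>k<m. (if j = k then pderiv j (pderiv k P) else 0)) = lap_x m P"
    by (simp only: sum_diagonal_delta) (simp add: lap_x_def)
  also have "(\<Sum>j<m. \<Sum>k<m. var (m + k) * pderiv k (pderiv (m + j) (pderiv j P))) = u_dx m (du_dx m P)"
    unfolding u_dx_def U_def du_dx_def pderiv_sum sum_distrib_left by (rule sum.swap)
  finally show ?thesis by (simp add: add.commute)
qed

lemma du_dx_x_du: "du_dx m (x_du m P) = x_du m (du_dx m P) + lap_u m P"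
proof -
  have "du_dx m (x_du m P) = (\<Sum>j<m. \<Sum>k<m. (if j = k then pderiv (m + j) (pderiv (m + k) P) else 0)
      + var k * pderiv (m + k) (pderiv (m + j) (pderiv j P)))"
    unfolding du_dx_def x_du_def X_def pderiv_sum
    by (intro sum.cong refl) (auto simp add: pderiv_var_mult pderiv_comm)
  also have "\<dots> = (\<Sum>j<m. \<Sum>k<m. (if j = k then pderiv (m + j) (pderiv (m + k) P) else 0))
      + (\<Sum>j<m. \<Sum>k<m. var k * pderiv (m + k) (pderiv (m + j) (pderiv j P)))"
    by (simp only: sum.distrib)
  also have "(\<Sum>j<m. \<Sum>k<m. (if j = k then pderiv (m + j) (pderiv (m + k) P) else 0)) = lap_u m P"
    by (simp only: sum_diagonal_delta) (simp add: lap_u_def)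
  also have "(\<Sum>j<m. \<Sum>k<m. var k * pderiv (m + k) (pderiv (m + j) (pderiv j P))) = x_du m (du_dx m P)"
    unfolding x_du_def X_def du_dx_def pderiv_sum sum_distrib_left by (rule sum.swap)
  finally show ?thesis by (simp add: add.commute)
qed

lemma du_dx_lap_x: "du_dx m (lap_x m P) = lap_x m (du_dx m P)"
  unfolding du_dx_def lap_x_def pderiv_sum
  by (subst sum.swap) (intro sum.cong refl; metis pderiv_comm)
lemma du_dx_lap_u: "du_dx m (lap_u m P) = lap_u m (du_dx m P)"
  unfolding du_dx_def lap_u_def pderiv_sum
  by (subst sum.swap) (intro sum.cong refl; metis pderiv_comm)

lemma x_du_u_dx: "x_du m (u_dx m P) = u_dx m (x_du m P) + euler_x m P - euler_u m P"
proof -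
  have "x_du m (u_dx m P) = (\<Sum>j<m. \<Sum>k<m. (if j = k then var j * pderiv k P else 0)
      + var j * (var (m + k) * pderiv (m + j) (pderiv k P)))"
    unfolding x_du_def u_dx_def X_def U_def pderiv_sum sum_distrib_left
    by (intro sum.cong refl) (simp add: pderiv_var_mult distrib_left)
  also have "\<dots> = euler_x m P + (\<Sum>j<m. \<Sum>k<m. var j * (var (m + k) * pderiv (m + j) (pderiv k P)))"
    by (simp only: sum.distrib sum_diagonal_delta) (simp add: euler_x_def)
  finally have 1: "x_du m (u_dx m P) = euler_x m P + (\<Sum>j<m. \<Sum>k<m. var j * (var (m + k) * pderiv (m + j) (pderiv k P)))" .
  have "u_dx m (x_du m P) = (\<Sum>k<m. \<Sum>j<m. (if j = k then var (m + j) * pderiv (m + j) P else 0)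
      + var (m + k) * (var j * pderiv k (pderiv (m + j) P)))"
    unfolding x_du_def u_dx_def X_def U_def pderiv_sum sum_distrib_left
    by (intro sum.cong refl) (auto simp add: pderiv_var_mult distrib_left)
  also have "\<dots> = (\<Sum>k<m. \<Sum>j<m. (if j = k then var (m + j) * pderiv (m + j) P else 0))
      + (\<Sum>k<m. \<Sum>j<m. var (m + k) * (var j * pderiv k (pderiv (m + j) P)))"
    by (simp only: sum.distrib)
  also have "(\<Sum>k<m. \<Sum>j<m. (if j = k then var (m + j) * pderiv (m + j) P else 0)) = euler_u m P"
    by (simp add: euler_u_def sum.delta')
  also have "(\<Sum>k<m. \<Sum>j<m. var (m + k) * (var j * pderiv k (pderiv (m + j) P)))
      = (\<Sum>j<m. \<Sum>k<m. var j * (var (m + k) * pderiv (m + j) (pderiv k P)))"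
    by (subst sum.swap, intro sum.cong refl) (simp add: mult.left_commute pderiv_comm)
  finally have 2: "u_dx m (x_du m P) = euler_u m P + (\<Sum>j<m. \<Sum>k<m. var j * (var (m + k) * pderiv (m + j) (pderiv k P)))" .
  show ?thesis using 1 2 by (simp add: algebra_simps)
qed

section \<open>Bidegree spaces\<close>

lemma Pspace_iff: "P \<in> Pspace m p q \<longleftrightarrow> (\<forall>a. lookup P a \<noteq> 0 \<longrightarrow> Poly_Mapping.keys a \<subseteq> {..<2*m}
      \<and> (\<Sum>j<m. lookup a j) = p \<and> (\<Sum>j<m. lookup a (m + j)) = q)"
  by (auto simp: Pspace_def in_keys_iff)

lemma Pspace_zero [simp]: "0 \<in> Pspace m p q"
  by (simp add: Pspace_def)
lemma Pspace_add: "P \<in> Pspace m p q \<Longrightarrow> Q \<in> Pspace m p q \<Longrightarrow> P + Q \<in> Pspace m p q"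
  unfolding Pspace_def using keys_add[of P Q] by blast
lemma Pspace_uminus: "P \<in> Pspace m p q \<Longrightarrow> - P \<in> Pspace m p q"
  unfolding Pspace_def by simp
lemma Pspace_diff: "P \<in> Pspace m p q \<Longrightarrow> Q \<in> Pspace m p q \<Longrightarrow> P - Q \<in> Pspace m p q"
  using Pspace_add[of P m p q "-Q"] Pspace_uminus[of Q] by simp
lemma Pspace_const: "P \<in> Pspace m p q \<Longrightarrow> const c * P \<in> Pspace m p q"
proof -
  have "Poly_Mapping.keys (const c * P) \<subseteq> Poly_Mapping.keys P" by (auto simp: in_keys_iff)
  then show "P \<in> Pspace m p q \<Longrightarrow> const c * P \<in> Pspace m p q" unfolding Pspace_def by blast
qed
lemma Pspace_sum: "(\<And>s. s \<in> S \<Longrightarrow> F s \<in> Pspace m p q) \<Longrightarrow> sum F S \<in> Pspace m p q"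
  by (induction S rule: infinite_finite_induct) (auto intro: Pspace_add)

lemma Pspace_mult:
  assumes "A \<in> Pspace m p q" "B \<in> Pspace m p' q'"
  shows "A * B \<in> Pspace m (p + p') (q + q')"
  unfolding Pspace_def
proof
  show "\<forall>a\<in>Poly_Mapping.keys (A * B). Poly_Mapping.keys a \<subseteq> {..<2*m}
      \<and> (\<Sum>j<m. lookup a j) = p + p' \<and> (\<Sum>j<m. lookup a (m + j)) = q + q'"
  proof
    fix a assume "a \<in> Poly_Mapping.keys (A * B)"
    then obtain a1 a2 where a: "a = a1 + a2" "a1 \<in> Poly_Mapping.keys A" "a2 \<in> Poly_Mapping.keys B"
      using keys_mult[of A B] by blast
    have "Poly_Mapping.keys a \<subseteq> Poly_Mapping.keys a1 \<union> Poly_Mapping.keys a2"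
      unfolding a by (rule keys_add)
    then show "Poly_Mapping.keys a \<subseteq> {..<2*m}
      \<and> (\<Sum>j<m. lookup a j) = p + p' \<and> (\<Sum>j<m. lookup a (m + j)) = q + q'"
      using assms a by (auto simp: Pspace_def lookup_add sum.distrib)
  qed
qed

lemma var_Pspace_x: "j < m \<Longrightarrow> var j \<in> Pspace m 1 0"
  by (auto simp: Pspace_def var_def lookup_single when_def sum.delta)
lemma var_Pspace_u: "j < m \<Longrightarrow> var (m + j) \<in> Pspace m 0 1"
  by (auto simp: Pspace_def var_def lookup_single when_def sum.delta)

lemma normx_Pspace: "normx m \<in> Pspace m 2 0"
  unfolding normx_eq_sum_var
proof (rule Pspace_sum)
  fix s assume "s \<in> {..<m}"
  then have "var s * var s \<in> Pspace m (1 + 1) (0 + 0)"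
    by (intro Pspace_mult var_Pspace_x) auto
  then show "var s * var s \<in> Pspace m 2 0" by (simp add: numeral_2_eq_2)
qed
lemma normu_Pspace: "normu m \<in> Pspace m 0 2"
  unfolding normu_eq_sum_var
proof (rule Pspace_sum)
  fix s assume "s \<in> {..<m}"
  then have "var (m + s) * var (m + s) \<in> Pspace m (0 + 0) (1 + 1)"
    by (intro Pspace_mult var_Pspace_u) auto
  then show "var (m + s) * var (m + s) \<in> Pspace m 0 2" by (simp add: numeral_2_eq_2)
qed
lemma ux_Pspace: "ux m \<in> Pspace m 1 1"
  unfolding ux_eq_sum_var
proof (rule Pspace_sum)
  fix s assume "s \<in> {..<m}"
  then have "var (m + s) * var s \<in> Pspace m (0 + 1) (1 + 0)"
    by (intro Pspace_mult var_Pspace_u var_Pspace_x) auto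
  then show "var (m + s) * var s \<in> Pspace m 1 1" by simp
qed

lemma pderiv_x_Pspace:
  assumes "P \<in> Pspace m p q" "j < m"
  shows "pderiv j P \<in> Pspace m (p - 1) q" "p = 0 \<Longrightarrow> pderiv j P = 0"
proof -
  have key: "lookup (pderiv j P) a \<noteq> 0 \<Longrightarrow> Poly_Mapping.keys a \<subseteq> {..<2*m}
      \<and> (\<Sum>i<m. lookup a i) + 1 = p \<and> (\<Sum>i<m. lookup a (m + i)) = q" for a
  proof -
    assume "lookup (pderiv j P) a \<noteq> 0"
    then have h: "lookup P (a + unit_exp j) \<noteq> 0" by (simp add: lookup_pderiv)
    then have h2: "Poly_Mapping.keys (a + unit_exp j) \<subseteq> {..<2*m}" "(\<Sum>i<m. lookup (a + unit_exp j) i) = p"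
      "(\<Sum>i<m. lookup (a + unit_exp j) (m + i)) = q"
      using assms(1) by (auto simp: Pspace_iff)
    have "Poly_Mapping.keys a \<subseteq> Poly_Mapping.keys (a + unit_exp j)"
      by (auto simp: in_keys_iff lookup_add)
    moreover have "(\<Sum>i<m. lookup (a + unit_exp j) i) = (\<Sum>i<m. lookup a i) + 1"
      using assms(2) by (simp add: lookup_add lookup_single when_def sum.distrib sum.delta)
    moreover have "(\<Sum>i<m. lookup (a + unit_exp j) (m + i)) = (\<Sum>i<m. lookup a (m + i))"
      using assms(2) by (intro sum.cong) (auto simp: lookup_add lookup_single when_def)
    ultimately show ?thesis using h2 by auto
  qed
  show "pderiv j P \<in> Pspace m (p - 1) q"
    unfolding Pspace_iff using key by fastforce
  show "p = 0 \<Longrightarrow> pderiv j P = 0"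
    using key by (intro poly_mapping_eqI) fastforce
qed

lemma pderiv_u_Pspace:
  assumes "P \<in> Pspace m p q" "j < m"
  shows "pderiv (m + j) P \<in> Pspace m p (q - 1)" "q = 0 \<Longrightarrow> pderiv (m + j) P = 0"
proof -
  have key: "lookup (pderiv (m + j) P) a \<noteq> 0 \<Longrightarrow> Poly_Mapping.keys a \<subseteq> {..<2*m}
      \<and> (\<Sum>i<m. lookup a i) = p \<and> (\<Sum>i<m. lookup a (m + i)) + 1 = q" for a
  proof -
    assume "lookup (pderiv (m + j) P) a \<noteq> 0"
    then have h: "lookup P (a + unit_exp (m + j)) \<noteq> 0" by (simp add: lookup_pderiv)
    then have h2: "Poly_Mapping.keys (a + unit_exp (m + j)) \<subseteq> {..<2*m}" "(\<Sum>i<m. lookup (a + unit_exp (m + j)) i) = p"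
      "(\<Sum>i<m. lookup (a + unit_exp (m + j)) (m + i)) = q"
      using assms(1) by (auto simp: Pspace_iff)
    have "Poly_Mapping.keys a \<subseteq> Poly_Mapping.keys (a + unit_exp (m + j))"
      by (auto simp: in_keys_iff lookup_add)
    moreover have "(\<Sum>i<m. lookup (a + unit_exp (m + j)) (m + i)) = (\<Sum>i<m. lookup a (m + i)) + 1"
      using assms(2) by (simp add: lookup_add lookup_single when_def sum.distrib sum.delta)
    moreover have "(\<Sum>i<m. lookup (a + unit_exp (m + j)) i) = (\<Sum>i<m. lookup a i)"
      using assms(2) by (intro sum.cong) (auto simp: lookup_add lookup_single when_def)
    ultimately show ?thesis using h2 by auto
  qed
  show "pderiv (m + j) P \<in> Pspace m p (q - 1)"
    unfolding Pspace_iff using key by fastforce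
  show "q = 0 \<Longrightarrow> pderiv (m + j) P = 0"
    using key by (intro poly_mapping_eqI) fastforce
qed

lemma u_dx_Pspace:
  assumes "W \<in> Pspace m p q"
  shows "u_dx m W \<in> Pspace m (p - 1) (q + 1)" "p = 0 \<Longrightarrow> u_dx m W = 0"
proof -
  show "u_dx m W \<in> Pspace m (p - 1) (q + 1)"
    unfolding u_dx_def U_def
  proof (rule Pspace_sum)
    fix j assume j: "j \<in> {..<m}"
    have "var (m + j) * pderiv j W \<in> Pspace m (0 + (p - 1)) (1 + q)"
      using j by (intro Pspace_mult var_Pspace_u pderiv_x_Pspace assms) auto
    then show "var (m + j) * pderiv j W \<in> Pspace m (p - 1) (q + 1)" by (simp add: add.commute)
  qed
  show "p = 0 \<Longrightarrow> u_dx m W = 0"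
    unfolding u_dx_def using pderiv_x_Pspace(2)[OF assms] by simp
qed

lemma x_du_Pspace:
  assumes "W \<in> Pspace m p q"
  shows "x_du m W \<in> Pspace m (p + 1) (q - 1)" "q = 0 \<Longrightarrow> x_du m W = 0"
proof -
  show "x_du m W \<in> Pspace m (p + 1) (q - 1)"
    unfolding x_du_def X_def
  proof (rule Pspace_sum)
    fix j assume j: "j \<in> {..<m}"
    have "var j * pderiv (m + j) W \<in> Pspace m (1 + p) (0 + (q - 1))"
      using j by (intro Pspace_mult var_Pspace_x pderiv_u_Pspace assms) auto
    then show "var j * pderiv (m + j) W \<in> Pspace m (p + 1) (q - 1)" by (simp add: add.commute)
  qed
  show "q = 0 \<Longrightarrow> x_du m W = 0"
    unfolding x_du_def using pderiv_u_Pspace(2)[OF assms] by simp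
qed

lemma du_dx_Pspace:
  assumes "W \<in> Pspace m p q"
  shows "du_dx m W \<in> Pspace m (p - 1) (q - 1)" "p = 0 \<Longrightarrow> du_dx m W = 0" "q = 0 \<Longrightarrow> du_dx m W = 0"
proof -
  show "du_dx m W \<in> Pspace m (p - 1) (q - 1)"
    unfolding du_dx_def
    by (rule Pspace_sum) (intro pderiv_u_Pspace pderiv_x_Pspace assms; simp)
  show "p = 0 \<Longrightarrow> du_dx m W = 0"
    unfolding du_dx_def using pderiv_x_Pspace(2)[OF assms] by simp
  show "q = 0 \<Longrightarrow> du_dx m W = 0"
    unfolding du_dx_def
    by (rule sum.neutral) (use pderiv_u_Pspace(2)[OF pderiv_x_Pspace(1)[OF assms]] in simp)
qed

lemma normx_mult_Pspace: "W \<in> Pspace m p q \<Longrightarrow> normx m * W \<in> Pspace m (p + 2) q"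
  using Pspace_mult[OF normx_Pspace, of W m p q] by (simp add: add.commute)
lemma normu_mult_Pspace: "W \<in> Pspace m p q \<Longrightarrow> normu m * W \<in> Pspace m p (q + 2)"
  using Pspace_mult[OF normu_Pspace, of W m p q] by (simp add: add.commute)
lemma ux_mult_Pspace: "W \<in> Pspace m p q \<Longrightarrow> ux m * W \<in> Pspace m (p + 1) (q + 1)"
  using Pspace_mult[OF ux_Pspace, of W m p q] by (simp add: add.commute)

lemma lookup_var_mult_pderiv: "lookup (var j * pderiv j W) a = of_nat (lookup a j) * lookup W a"
  by (auto simp: lookup_var_mult lookup_pderiv unit_exp_simps)

lemma euler_x_Pspace: "W \<in> Pspace m p q \<Longrightarrow> euler_x m W = of_nat p * W"
proof (rule poly_mapping_eqI)
  fix a assume W: "W \<in> Pspace m p q"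
  have "lookup (euler_x m W) a = (\<Sum>j<m. of_nat (lookup a j)) * lookup W a"
    by (simp add: euler_x_def lookup_sum lookup_var_mult_pderiv sum_distrib_right)
  also have "\<dots> = of_nat p * lookup W a"
  proof (cases "lookup W a = 0")
    case False
    then have "(\<Sum>j<m. lookup a j) = p" using W by (auto simp: Pspace_iff)
    then show ?thesis by (simp flip: of_nat_sum)
  qed simp
  finally show "lookup (euler_x m W) a = lookup (of_nat p * W) a" by (simp add: of_nat_const)
qed

lemma euler_u_Pspace: "W \<in> Pspace m p q \<Longrightarrow> euler_u m W = of_nat q * W"
proof (rule poly_mapping_eqI)
  fix a assume W: "W \<in> Pspace m p q"
  have "lookup (euler_u m W) a = (\<Sum>j<m. of_nat (lookup a (m + j))) * lookup W a"
    by (simp add: euler_u_def lookup_sum lookup_var_mult_pderiv sum_distrib_right)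
  also have "\<dots> = of_nat q * lookup W a"
  proof (cases "lookup W a = 0")
    case False
    then have "(\<Sum>j<m. lookup a (m + j)) = q" using W by (auto simp: Pspace_iff)
    then show ?thesis by (simp flip: of_nat_sum)
  qed simp
  finally show "lookup (euler_u m W) a = lookup (of_nat q * W) a" by (simp add: of_nat_const)
qed

lemma Kerlap_const: "W \<in> Kerlap m p q \<Longrightarrow> const c * W \<in> Kerlap m p q"
  by (simp add: Kerlap_def Pspace_const)
lemma Kerlap_zero [simp]: "0 \<in> Kerlap m p q"
  by (simp add: Kerlap_def)

lemma Kerlap_du_dx_harmonic: "W \<in> Kerlap m p q \<Longrightarrow> lap_x m (du_dx m W) = 0 \<and> lap_u m (du_dx m W) = 0"
  by (simp add: Kerlap_def flip: du_dx_lap_x du_dx_lap_u)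

lemma du_dx_Kerlap: "W \<in> Kerlap m p q \<Longrightarrow> du_dx m W \<in> Kerlap m (p - 1) (q - 1)"
  using Kerlap_du_dx_harmonic[of W m p q] du_dx_Pspace(1)[of W m p q] by (simp add: Kerlap_def)

section \<open>Adjoints for the Fischer product\<close>

lemma fischer_normx_mult_right: "fischer P (normx m * Q) = fischer (lap_x m P) Q"
proof -
  have "fischer P (normx m * Q) = (\<Sum>j<m. fischer P (var j * (var j * Q)))"
    by (simp add: normx_eq_sum_var sum_distrib_right mult.assoc fischer_sum_right)
  also have "\<dots> = (\<Sum>j<m. fischer (pderiv j (pderiv j P)) Q)"
    by (simp add: fischer_var_right)
  also have "\<dots> = fischer (lap_x m P) Q"
    by (simp add: lap_x_def fischer_sum_left)
  finally show ?thesis .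
qed

lemma fischer_normu_mult_right: "fischer P (normu m * Q) = fischer (lap_u m P) Q"
proof -
  have "fischer P (normu m * Q) = (\<Sum>j<m. fischer P (var (m + j) * (var (m + j) * Q)))"
    by (simp add: normu_eq_sum_var sum_distrib_right mult.assoc fischer_sum_right)
  also have "\<dots> = (\<Sum>j<m. fischer (pderiv (m + j) (pderiv (m + j) P)) Q)"
    by (simp add: fischer_var_right)
  also have "\<dots> = fischer (lap_u m P) Q"
    by (simp add: lap_u_def fischer_sum_left)
  finally show ?thesis .
qed

lemma fischer_ux_mult_right: "fischer P (ux m * Q) = fischer (du_dx m P) Q"
proof -
  have "fischer P (ux m * Q) = (\<Sum>j<m. fischer P (var (m + j) * (var j * Q)))"
    by (simp add: ux_eq_sum_var sum_distrib_right mult.assoc fischer_sum_right)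
  also have "\<dots> = (\<Sum>j<m. fischer (pderiv (m + j) (pderiv j P)) Q)"
    by (simp add: fischer_var_right pderiv_comm)
  also have "\<dots> = fischer (du_dx m P) Q"
    by (simp add: du_dx_def fischer_sum_left)
  finally show ?thesis .
qed

lemma fischer_u_dx_left: "fischer (u_dx m P) Q = fischer P (x_du m Q)"
proof -
  have "fischer (u_dx m P) Q = (\<Sum>j<m. fischer (var (m + j) * pderiv j P) Q)"
    by (simp add: u_dx_def U_def fischer_sum_left)
  also have "\<dots> = (\<Sum>j<m. fischer P (var j * pderiv (m + j) Q))"
    by (simp add: fischer_var_left fischer_var_right)
  also have "\<dots> = fischer P (x_du m Q)"
    by (simp add: x_du_def X_def fischer_sum_right)
  finally show ?thesis .
qed

lemma fischer_u_dx_right: "fischer P (u_dx m Q) = fischer (x_du m P) Q"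
  by (metis fischer_swap fischer_u_dx_left)

text \<open>It is applied with (f i, L) = (|x|^(2i) F, \<Delta>_x),
(|u|^(2i) F, \<Delta>_u), (S_u^i H, \<langle>x,\<partial>_u\<rangle>) and (C^i F, \<langle>\<partial>_u,\<partial>_x\<rangle>).\<close>

lemma fischer_lowering_orthogonal:
  assumes adjoint: "\<And>i j. fischer (f i) (g (Suc j)) = fischer (L (f i)) (g j)"
    and lowering: "\<And>i. \<exists>c. L (f (Suc i)) = const c * f i"
    and bottom: "L (f 0) = 0"
    and "i < j"
  shows "fischer (f i) (g j) = 0"
  using \<open>i < j\<close>
proof (induction i arbitrary: j)
  case 0
  then obtain j' where "j = Suc j'" by (cases j) auto
  then show ?case by (simp add: adjoint bottom)
next
  case (Suc i)
  then obtain j' where j: "j = Suc j'" and "i < j'" by (cases j) auto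
  obtain c where "L (f (Suc i)) = const c * f i" using lowering by blast
  then show ?case using Suc.IH[OF \<open>i < j'\<close>] by (simp add: j adjoint fischer_const_left)
qed

lemma fischer_lowering_same:
  assumes adjoint: "\<And>i j. fischer (f i) (g (Suc j)) = fischer (L (f i)) (g j)"
    and lowering: "\<And>i. \<exists>c. L (f (Suc i)) = const c * f i"
  shows "\<exists>z. fischer (f i) (g i) = z * fischer (f 0) (g 0)"
proof (induction i)
  case 0
  show ?case by (rule exI[of _ 1]) simp
next
  case (Suc i)
  then obtain z where z: "fischer (f i) (g i) = z * fischer (f 0) (g 0)" by blast
  obtain c where "L (f (Suc i)) = const c * f i" using lowering by blast
  then have "fischer (f (Suc i)) (g (Suc i)) = (cnj c * z) * fischer (f 0) (g 0)"
    by (simp add: adjoint fischer_const_left z)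
  then show ?case by blast
qed

section \<open>The radial ideal and the projection \<pi>_s\<close>

definition in_radial_ideal :: "nat \<Rightarrow> cpoly \<Rightarrow> bool" where
  "in_radial_ideal m Z \<longleftrightarrow> (\<exists>A B. Z = normx m * A + normu m * B)"

lemma in_radial_ideal_0 [simp]: "in_radial_ideal m 0"
  unfolding in_radial_ideal_def by (rule exI[of _ 0], rule exI[of _ 0]) simp
lemma in_radial_ideal_normx_mult [simp]: "in_radial_ideal m (normx m * A)"
  unfolding in_radial_ideal_def by (rule exI[of _ A], rule exI[of _ 0]) simp
lemma in_radial_ideal_normu_mult [simp]: "in_radial_ideal m (normu m * B)"
  unfolding in_radial_ideal_def by (rule exI[of _ 0], rule exI[of _ B]) simp
lemma in_radial_ideal_add: "in_radial_ideal m Z \<Longrightarrow> in_radial_ideal m Z' \<Longrightarrow> in_radial_ideal m (Z + Z')"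
  unfolding in_radial_ideal_def
proof (elim exE)
  fix A B A' B' assume "Z = normx m * A + normu m * B" "Z' = normx m * A' + normu m * B'"
  then show "\<exists>A B. Z + Z' = normx m * A + normu m * B"
    by (intro exI[of _ "A + A'"] exI[of _ "B + B'"]) (simp add: algebra_simps)
qed
lemma in_radial_ideal_mult: "in_radial_ideal m Z \<Longrightarrow> in_radial_ideal m (C * Z)"
  unfolding in_radial_ideal_def
proof (elim exE)
  fix A B assume "Z = normx m * A + normu m * B"
  then show "\<exists>A B. C * Z = normx m * A + normu m * B"
    by (intro exI[of _ "C * A"] exI[of _ "C * B"]) (simp add: algebra_simps)
qed
lemma in_radial_ideal_uminus: "in_radial_ideal m Z \<Longrightarrow> in_radial_ideal m (- Z)"
  using in_radial_ideal_mult[of m Z "-1"] by simp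
lemma in_radial_ideal_diff: "in_radial_ideal m Z \<Longrightarrow> in_radial_ideal m Z' \<Longrightarrow> in_radial_ideal m (Z - Z')"
  using in_radial_ideal_add[of m Z "- Z'"] in_radial_ideal_uminus[of m Z'] by simp
lemma in_radial_ideal_sum: "(\<And>s. s \<in> S \<Longrightarrow> in_radial_ideal m (F s)) \<Longrightarrow> in_radial_ideal m (sum F S)"
  by (induction S rule: infinite_finite_induct) (auto intro: in_radial_ideal_add)

lemma harmonic_in_radial_ideal_eq_0:
  assumes "lap_x m Z = 0" "lap_u m Z = 0" "in_radial_ideal m Z"
  shows "Z = 0"
proof -
  obtain A B where Z: "Z = normx m * A + normu m * B" using assms(3) unfolding in_radial_ideal_def by blast
  have "fischer Z Z = fischer Z (normx m * A) + fischer Z (normu m * B)"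
    by (subst (2) Z) (simp add: fischer_add_right)
  also have "\<dots> = 0" by (simp add: fischer_normx_mult_right fischer_normu_mult_right assms)
  finally show ?thesis by (simp add: fischer_self_eq_0_iff)
qed

lemma harmonic_radial_congruent_eq:
  assumes "lap_x m Z = 0" "lap_u m Z = 0" "lap_x m Z' = 0" "lap_u m Z' = 0" "in_radial_ideal m (Z - Z')"
  shows "Z = Z'"
  using harmonic_in_radial_ideal_eq_0[of m "Z - Z'"] assms by simp

lemma in_radial_ideal_pow_mult:
  "a \<noteq> 0 \<or> b \<noteq> 0 \<Longrightarrow> in_radial_ideal m (normx m ^ a * normu m ^ b * G)"
  by (cases a; cases b) (simp_all add: mult.assoc)

lemma radial_expansion_minus_constant_term:
  "in_radial_ideal m ((\<Sum>a\<le>A. \<Sum>b\<le>B. normx m ^ a * normu m ^ b * G a b) - G 0 0)"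
proof -
  have "(\<Sum>a\<le>A. \<Sum>b\<le>(B::nat). (if a = 0 \<and> b = 0 then G 0 0 else 0)) =
        (\<Sum>a\<le>(A::nat). (if a = 0 then G 0 0 else 0))"
    by (rule sum.cong[OF refl]) (auto simp: sum.delta)
  then have "(\<Sum>a\<le>A. \<Sum>b\<le>B. normx m ^ a * normu m ^ b * G a b) - G 0 0 =
     (\<Sum>a\<le>A. \<Sum>b\<le>B. normx m ^ a * normu m ^ b * G a b - (if a = 0 \<and> b = 0 then G 0 0 else 0))"
    by (simp add: sum_subtractf sum.delta)
  also have "in_radial_ideal m \<dots>"
    by (intro in_radial_ideal_sum) (simp add: in_radial_ideal_pow_mult)
  finally show ?thesis .
qed

lemma pis_eqI:
  assumes Hs: "\<forall>a\<le>p div 2. \<forall>b\<le>q div 2. Hs a b \<in> Kerlap m (p - 2*a) (q - 2*b)"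
    and P: "P = (\<Sum>a\<le>p div 2. \<Sum>b\<le>q div 2. normx m ^ a * normu m ^ b * Hs a b)"
  shows "pis m p q P = Hs 0 0"
  unfolding pis_def
proof (rule the_equality)
  show "\<exists>Hs'. (\<forall>a\<le>p div 2. \<forall>b\<le>q div 2. Hs' a b \<in> Kerlap m (p - 2*a) (q - 2*b))
      \<and> P = (\<Sum>a\<le>p div 2. \<Sum>b\<le>q div 2. normx m ^ a * normu m ^ b * Hs' a b) \<and> Hs 0 0 = Hs' 0 0"
    using Hs P by blast
next
  fix H assume "\<exists>Hs'. (\<forall>a\<le>p div 2. \<forall>b\<le>q div 2. Hs' a b \<in> Kerlap m (p - 2*a) (q - 2*b))
      \<and> P = (\<Sum>a\<le>p div 2. \<Sum>b\<le>q div 2. normx m ^ a * normu m ^ b * Hs' a b) \<and> H = Hs' 0 0"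
  then obtain Hs' where Hs': "\<forall>a\<le>p div 2. \<forall>b\<le>q div 2. Hs' a b \<in> Kerlap m (p - 2*a) (q - 2*b)"
    and P': "P = (\<Sum>a\<le>p div 2. \<Sum>b\<le>q div 2. normx m ^ a * normu m ^ b * Hs' a b)" and H: "H = Hs' 0 0"
    by blast
  let ?K = "\<lambda>a b. Hs' a b - Hs a b"
  have sum0: "(\<Sum>a\<le>p div 2. \<Sum>b\<le>q div 2. normx m ^ a * normu m ^ b * ?K a b) = 0"
    using P P' by (simp add: right_diff_distrib sum_subtractf)
  have "in_radial_ideal m ((\<Sum>a\<le>p div 2. \<Sum>b\<le>q div 2. normx m ^ a * normu m ^ b * ?K a b) - ?K 0 0)"
    by (rule radial_expansion_minus_constant_term)
  then have "in_radial_ideal m (- (Hs' 0 0 - Hs 0 0))"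
    by (simp add: sum0)
  then have I: "in_radial_ideal m (Hs' 0 0 - Hs 0 0)"
    using in_radial_ideal_uminus by fastforce
  have "Hs 0 0 \<in> Kerlap m p q" "Hs' 0 0 \<in> Kerlap m p q"
    using Hs[rule_format, of 0 0] Hs'[rule_format, of 0 0] by simp_all
  then show "H = Hs 0 0" unfolding H
    by (intro harmonic_radial_congruent_eq[OF _ _ _ _ I]) (auto simp: Kerlap_def)
qed

lemma sum_atMost_0_1:
  assumes "\<And>a. 2 \<le> a \<Longrightarrow> g a = 0" "A = 0 \<Longrightarrow> g 1 = 0"
  shows "(\<Sum>a\<le>(A::nat). g a) = g 0 + (g 1 :: cpoly)"
proof (cases "A = 0")
  case True then show ?thesis using assms by simp
next
  case False
  have "(\<Sum>a\<le>A. g a) = (\<Sum>a\<in>{0,1}. g a)"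
    by (rule sum.mono_neutral_right) (use False assms in auto)
  then show ?thesis by simp
qed

lemma pis_radial_expansion:
  assumes "H \<in> Kerlap m p q" "Hx \<in> Kerlap m (p - 2) q" "Hu \<in> Kerlap m p (q - 2)"
    and "Hxu \<in> Kerlap m (p - 2) (q - 2)"
    and "p < 2 \<Longrightarrow> Hx = 0 \<and> Hxu = 0" "q < 2 \<Longrightarrow> Hu = 0 \<and> Hxu = 0"
  shows "pis m p q (H + normx m * Hx + normu m * Hu + normx m * normu m * Hxu) = H"
proof -
  define Hs :: "nat \<Rightarrow> nat \<Rightarrow> cpoly" where
    "Hs a b = (if a = 0 \<and> b = 0 then H else if a = 1 \<and> b = 0 then Hx
       else if a = 0 \<and> b = 1 then Hu else if a = 1 \<and> b = 1 then Hxu else 0)" for a b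
  have Hs: "\<forall>a\<le>p div 2. \<forall>b\<le>q div 2. Hs a b \<in> Kerlap m (p - 2*a) (q - 2*b)"
    using assms(1-4) by (auto simp: Hs_def)
  have "(\<Sum>b\<le>q div 2. normx m ^ a * normu m ^ b * Hs a b)
      = normx m ^ a * Hs a 0 + normx m ^ a * normu m * Hs a 1" for a
    by (subst sum_atMost_0_1) (use assms(6) in \<open>auto simp: Hs_def\<close>)
  then have expansion: "(\<Sum>a\<le>p div 2. \<Sum>b\<le>q div 2. normx m ^ a * normu m ^ b * Hs a b)
      = H + normx m * Hx + normu m * Hu + normx m * normu m * Hxu"
    by (simp only:) (subst sum_atMost_0_1, use assms(5) in \<open>auto simp: Hs_def algebra_simps\<close>)
  show ?thesis
    using pis_eqI[OF Hs expansion[symmetric]] by (simp add: Hs_def)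
qed

lemma pis_Kerlap: "W \<in> Kerlap m p q \<Longrightarrow> pis m p q W = W"
  using pis_radial_expansion[of W m p q 0 0 0] by simp

section \<open>S_u on simplicial harmonics\<close>

lemma u_dx_funpow_Harm:
  assumes H: "H \<in> Harm m p0 q0"
  shows "(u_dx m ^^ j) H \<in> Pspace m (p0 - j) (q0 + j) \<and> lap_x m ((u_dx m ^^ j) H) = 0
    \<and> lap_u m ((u_dx m ^^ j) H) = 0 \<and> du_dx m ((u_dx m ^^ j) H) = 0"
proof (induction j)
  case 0
  then show ?case using H by (simp add: Harm_def)
next
  case (Suc j)
  let ?Z = "(u_dx m ^^ j) H"
  have "u_dx m ?Z \<in> Pspace m (p0 - j - 1) (q0 + j + 1)"
    using Suc by (intro u_dx_Pspace) auto
  then show ?case using Suc by (simp add: lap_x_u_dx lap_u_u_dx du_dx_u_dx)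
qed

lemma u_dx_funpow_Kerlap: "H \<in> Harm m p0 q0 \<Longrightarrow> (u_dx m ^^ j) H \<in> Kerlap m (p0 - j) (q0 + j)"
  using u_dx_funpow_Harm[of H m p0 q0 j] by (simp add: Kerlap_def)

lemma x_du_u_dx_funpow_Suc:
  assumes H: "H \<in> Harm m p0 q0"
  shows "\<exists>c. x_du m ((u_dx m ^^ Suc j) H) = const c * (u_dx m ^^ j) H"
proof (induction j)
  case 0
  have XH: "x_du m H = 0" using H by (simp add: Harm_def)
  have HP: "H \<in> Pspace m p0 q0" using H by (simp add: Harm_def)
  have "x_du m (u_dx m H) = const (of_nat p0 - of_nat q0) * H"
    unfolding x_du_u_dx XH euler_x_Pspace[OF HP] euler_u_Pspace[OF HP]
    by (rule poly_mapping_eqI) (simp add: lookup_add lookup_minus const_simps; simp add: algebra_simps)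
  then show ?case by auto
next
  case (Suc j)
  then obtain c where c: "x_du m ((u_dx m ^^ Suc j) H) = const c * (u_dx m ^^ j) H" by blast
  let ?Z = "(u_dx m ^^ Suc j) H"
  have ZP: "?Z \<in> Pspace m (p0 - Suc j) (q0 + Suc j)" using u_dx_funpow_Harm[OF H] by blast
  have "x_du m (u_dx m ?Z) = u_dx m (x_du m ?Z) + euler_x m ?Z - euler_u m ?Z" by (rule x_du_u_dx)
  also have "\<dots> = const (c + of_nat (p0 - Suc j) - of_nat (q0 + Suc j)) * ?Z"
    unfolding c euler_x_Pspace[OF ZP] euler_u_Pspace[OF ZP]
    by (rule poly_mapping_eqI) (simp add: lookup_add lookup_minus const_simps del: of_nat_add of_nat_Suc; simp add: algebra_simps)
  finally show ?case by auto
qed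

lemma fischer_u_dx_funpow_lowering:
  assumes H: "H \<in> Harm m p0 q0"
  shows "j < j' \<Longrightarrow> fischer ((u_dx m ^^ j) H) ((u_dx m ^^ j') H') = 0"
    and "\<exists>z. fischer ((u_dx m ^^ j) H) ((u_dx m ^^ j) H') = z * fischer H H'"
proof -
  have adjoint: "fischer ((u_dx m ^^ i) H) ((u_dx m ^^ Suc k) H')
      = fischer (x_du m ((u_dx m ^^ i) H)) ((u_dx m ^^ k) H')" for i k
    by (simp add: fischer_u_dx_right)
  have lowering: "\<exists>c. x_du m ((u_dx m ^^ Suc i) H) = const c * (u_dx m ^^ i) H" for i
    by (rule x_du_u_dx_funpow_Suc[OF H])
  have bottom: "x_du m ((u_dx m ^^ 0) H) = 0"
    using H by (simp add: Harm_def)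
  show "j < j' \<Longrightarrow> fischer ((u_dx m ^^ j) H) ((u_dx m ^^ j') H') = 0"
    by (rule fischer_lowering_orthogonal[where L = "x_du m" and f = "\<lambda>i. (u_dx m ^^ i) H"
        and g = "\<lambda>j. (u_dx m ^^ j) H'", OF adjoint lowering bottom])
  show "\<exists>z. fischer ((u_dx m ^^ j) H) ((u_dx m ^^ j) H') = z * fischer H H'"
    using fischer_lowering_same[where L = "x_du m" and f = "\<lambda>i. (u_dx m ^^ i) H"
        and g = "\<lambda>j. (u_dx m ^^ j) H'", OF adjoint lowering] by simp
qed

lemma su_iter_Harm:
  assumes H: "H \<in> Harm m p0 q0"
  shows "su_iter m j p0 q0 H = (u_dx m ^^ j) H"
proof (induction j)
  case 0
  then show ?case by simp
next
  case (Suc j)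
  have "su_iter m (Suc j) p0 q0 H = pis m (p0 - Suc j) (q0 + Suc j) ((u_dx m ^^ Suc j) H)"
    by (simp add: Suc)
  also have "\<dots> = (u_dx m ^^ Suc j) H"
    by (rule pis_Kerlap) (rule u_dx_funpow_Kerlap[OF H])
  finally show ?case .
qed

section \<open>Powers of |x|^2 and |u|^2\<close>

lemma normx_pow_mult_Pspace: "R \<in> Pspace m p q \<Longrightarrow> normx m ^ a * R \<in> Pspace m (p + 2 * a) q"
proof (induction a)
  case (Suc a)
  then have "normx m * (normx m ^ a * R) \<in> Pspace m (p + 2 * a + 2) q" by (intro normx_mult_Pspace) auto
  then show ?case by (simp add: mult.assoc)
qed simp

lemma normu_pow_mult_Pspace: "R \<in> Pspace m p q \<Longrightarrow> normu m ^ b * R \<in> Pspace m p (q + 2 * b)"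
proof (induction b)
  case (Suc b)
  then have "normu m * (normu m ^ b * R) \<in> Pspace m p (q + 2 * b + 2)" by (intro normu_mult_Pspace) auto
  then show ?case by (simp add: mult.assoc)
qed simp

lemma lap_x_normx_pow_Suc_mult:
  assumes "lap_x m R = 0" "R \<in> Pspace m p q"
  shows "\<exists>c. lap_x m (normx m ^ Suc a * R) = const c * (normx m ^ a * R)"
proof (induction a)
  case 0
  have "lap_x m (normx m * R) = const (2 * of_nat m + 4 * of_nat p) * R"
    unfolding lap_x_normx_mult euler_x_Pspace[OF assms(2)] assms(1)
    by (rule poly_mapping_eqI) (simp add: lookup_add lookup_minus const_simps; simp add: algebra_simps)
  then show ?case by auto
next
  case (Suc a)
  then obtain c where c: "lap_x m (normx m ^ Suc a * R) = const c * (normx m ^ a * R)" by blast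
  have ZP: "normx m ^ Suc a * R \<in> Pspace m (p + 2 * Suc a) q" by (rule normx_pow_mult_Pspace[OF assms(2)])
  have "lap_x m (normx m ^ Suc (Suc a) * R) = lap_x m (normx m * (normx m ^ Suc a * R))"
    by (simp add: mult.assoc)
  also have "\<dots> = const (2 * of_nat m + 4 * of_nat (p + 2 * Suc a) + c) * (normx m ^ Suc a * R)"
    unfolding lap_x_normx_mult c euler_x_Pspace[OF ZP]
    by (rule poly_mapping_eqI)
      (simp add: lookup_add lookup_minus const_simps del: of_nat_add of_nat_Suc of_nat_mult;
        simp add: algebra_simps)
  finally show ?case by blast
qed

lemma lap_u_normu_pow_Suc_mult:
  assumes "lap_u m R = 0" "R \<in> Pspace m p q"
  shows "\<exists>c. lap_u m (normu m ^ Suc b * R) = const c * (normu m ^ b * R)"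
proof (induction b)
  case 0
  have "lap_u m (normu m * R) = const (2 * of_nat m + 4 * of_nat q) * R"
    unfolding lap_u_normu_mult euler_u_Pspace[OF assms(2)] assms(1)
    by (rule poly_mapping_eqI) (simp add: lookup_add lookup_minus const_simps; simp add: algebra_simps)
  then show ?case by auto
next
  case (Suc b)
  then obtain c where c: "lap_u m (normu m ^ Suc b * R) = const c * (normu m ^ b * R)" by blast
  have ZP: "normu m ^ Suc b * R \<in> Pspace m p (q + 2 * Suc b)" by (rule normu_pow_mult_Pspace[OF assms(2)])
  have "lap_u m (normu m ^ Suc (Suc b) * R) = lap_u m (normu m * (normu m ^ Suc b * R))"
    by (simp add: mult.assoc)
  also have "\<dots> = const (2 * of_nat m + 4 * of_nat (q + 2 * Suc b) + c) * (normu m ^ Suc b * R)"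
    unfolding lap_u_normu_mult c euler_u_Pspace[OF ZP]
    by (rule poly_mapping_eqI)
      (simp add: lookup_add lookup_minus const_simps del: of_nat_add of_nat_Suc of_nat_mult;
        simp add: algebra_simps)
  finally show ?case by blast
qed

lemma lap_x_normu_pow_mult: "lap_x m (normu m ^ b * Z) = normu m ^ b * lap_x m Z"
  by (induction b arbitrary: Z) (simp_all add: mult.assoc lap_x_normu_mult)

lemma fischer_normx_pow_lowering:
  assumes "lap_x m F = 0" "F \<in> Pspace m p q"
  shows "a < a' \<Longrightarrow> fischer (normx m ^ a * F) (normx m ^ a' * G) = 0"
    and "\<exists>z. fischer (normx m ^ a * F) (normx m ^ a * G) = z * fischer F G"
proof -
  have adjoint: "fischer (normx m ^ i * F) (normx m ^ Suc j * G)
      = fischer (lap_x m (normx m ^ i * F)) (normx m ^ j * G)" for i j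
    by (simp add: mult.assoc fischer_normx_mult_right)
  have lowering: "\<exists>c. lap_x m (normx m ^ Suc i * F) = const c * (normx m ^ i * F)" for i
    by (rule lap_x_normx_pow_Suc_mult[OF assms])
  have bottom: "lap_x m (normx m ^ 0 * F) = 0"
    using assms(1) by simp
  show "a < a' \<Longrightarrow> fischer (normx m ^ a * F) (normx m ^ a' * G) = 0"
    by (rule fischer_lowering_orthogonal[where L = "lap_x m" and f = "\<lambda>i. normx m ^ i * F"
        and g = "\<lambda>j. normx m ^ j * G", OF adjoint lowering bottom])
  show "\<exists>z. fischer (normx m ^ a * F) (normx m ^ a * G) = z * fischer F G"
    using fischer_lowering_same[where L = "lap_x m" and f = "\<lambda>i. normx m ^ i * F"
        and g = "\<lambda>j. normx m ^ j * G", OF adjoint lowering] by simp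
qed

lemma fischer_normu_pow_lowering:
  assumes "lap_u m F = 0" "F \<in> Pspace m p q"
  shows "b < b' \<Longrightarrow> fischer (normu m ^ b * F) (normu m ^ b' * G) = 0"
    and "\<exists>z. fischer (normu m ^ b * F) (normu m ^ b * G) = z * fischer F G"
proof -
  have adjoint: "fischer (normu m ^ i * F) (normu m ^ Suc j * G)
      = fischer (lap_u m (normu m ^ i * F)) (normu m ^ j * G)" for i j
    by (simp add: mult.assoc fischer_normu_mult_right)
  have lowering: "\<exists>c. lap_u m (normu m ^ Suc i * F) = const c * (normu m ^ i * F)" for i
    by (rule lap_u_normu_pow_Suc_mult[OF assms])
  have bottom: "lap_u m (normu m ^ 0 * F) = 0"
    using assms(1) by simp
  show "b < b' \<Longrightarrow> fischer (normu m ^ b * F) (normu m ^ b' * G) = 0"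
    by (rule fischer_lowering_orthogonal[where L = "lap_u m" and f = "\<lambda>i. normu m ^ i * F"
        and g = "\<lambda>j. normu m ^ j * G", OF adjoint lowering bottom])
  show "\<exists>z. fischer (normu m ^ b * F) (normu m ^ b * G) = z * fischer F G"
    using fischer_lowering_same[where L = "lap_u m" and f = "\<lambda>i. normu m ^ i * F"
        and g = "\<lambda>j. normu m ^ j * G", OF adjoint lowering] by simp
qed

lemma fischer_radial_lex_less:
  assumes F: "F \<in> Kerlap m p q" and ab: "a < a' \<or> a = a' \<and> b < b'"
  shows "fischer (normx m ^ a * normu m ^ b * F) (normx m ^ a' * normu m ^ b' * G) = 0"
proof -
  have FP: "F \<in> Pspace m p q" "lap_x m F = 0" "lap_u m F = 0"
    using F by (auto simp: Kerlap_def)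
  then have MF: "lap_x m (normu m ^ b * F) = 0" "normu m ^ b * F \<in> Pspace m p (q + 2 * b)"
    by (simp_all add: lap_x_normu_pow_mult normu_pow_mult_Pspace)
  from ab consider "a < a'" | "a = a'" "b < b'" by blast
  then show ?thesis
  proof cases
    case 1
    then show ?thesis using fischer_normx_pow_lowering(1)[OF MF] by (simp add: mult.assoc)
  next
    case 2
    obtain z where "fischer (normx m ^ a * (normu m ^ b * F)) (normx m ^ a * (normu m ^ b' * G))
        = z * fischer (normu m ^ b * F) (normu m ^ b' * G)"
      using fischer_normx_pow_lowering(2)[OF MF] by blast
    then show ?thesis
      using 2 fischer_normu_pow_lowering(1)[OF FP(3,1)] by (simp add: mult.assoc)
  qed
qed

lemma fischer_radial_orthogonal:
  assumes F: "F \<in> Kerlap m p q" and G: "G \<in> Kerlap m p' q'" and ab: "(a, b) \<noteq> (a', b')"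
  shows "fischer (normx m ^ a * normu m ^ b * F) (normx m ^ a' * normu m ^ b' * G) = 0"
proof -
  from ab consider "a < a' \<or> a = a' \<and> b < b'" | "a' < a \<or> a' = a \<and> b' < b"
    by (metis linorder_neqE_nat prod.inject)
  then show ?thesis
  proof cases
    case 1
    then show ?thesis by (rule fischer_radial_lex_less[OF F])
  next
    case 2
    then show ?thesis using fischer_radial_lex_less[OF G] fischer_swap by (metis complex_cnj_zero)
  qed
qed

lemma fischer_radial_same:
  assumes F: "F \<in> Kerlap m p q"
  shows "\<exists>z. fischer (normx m ^ a * normu m ^ b * F) (normx m ^ a * normu m ^ b * G)
    = z * fischer F G"
proof -
  have FP: "F \<in> Pspace m p q" "lap_x m F = 0" "lap_u m F = 0"
    using F by (auto simp: Kerlap_def)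
  then have MF: "lap_x m (normu m ^ b * F) = 0" "normu m ^ b * F \<in> Pspace m p (q + 2 * b)"
    by (simp_all add: lap_x_normu_pow_mult normu_pow_mult_Pspace)
  obtain z where "fischer (normx m ^ a * (normu m ^ b * F)) (normx m ^ a * (normu m ^ b * G))
      = z * fischer (normu m ^ b * F) (normu m ^ b * G)"
    using fischer_normx_pow_lowering(2)[OF MF] by blast
  moreover obtain z' where "fischer (normu m ^ b * F) (normu m ^ b * G) = z' * fischer F G"
    using fischer_normu_pow_lowering(2)[OF FP(3,1)] by blast
  ultimately have "fischer (normx m ^ a * normu m ^ b * F) (normx m ^ a * normu m ^ b * G)
      = (z * z') * fischer F G"
    by (simp add: mult.assoc)
  then show ?thesis by blast
qed

section \<open>The operator C\<close>

text \<open>For x-harmonic G of x-degree p - 1, \<Delta>_x (|x|^2 G) = 2 (m + 2p - 2) G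
(lemma lap_x_normx_mult); kappa m p inverts the factor m + 2p - 2, which is nonzero for m > 2.\<close>

definition kappa :: "nat \<Rightarrow> nat \<Rightarrow> complex" where
  "kappa m p = 1 / (of_nat m + 2 * of_nat p - 2)"

text \<open>Explicit form of C = \<pi>_s \<langle>u,x\<rangle> on Kerlap m p q (lemma pis_ux_mult).\<close>

definition C_op :: "nat \<Rightarrow> nat \<Rightarrow> nat \<Rightarrow> cpoly \<Rightarrow> cpoly" where
  "C_op m p q W = ux m * W - const (kappa m p) * (normx m * u_dx m W)
     - const (kappa m q) * (normu m * x_du m W)
     + const (kappa m p) * (const (kappa m q) * (normx m * (normu m * du_dx m W)))"

lemma euler_x_lowering:
  assumes W: "W \<in> Pspace m p q"
  shows "euler_x m (u_dx m W) = const (of_nat p - 1) * u_dx m W"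
    and "euler_x m (du_dx m W) = const (of_nat p - 1) * du_dx m W"
    and "euler_x m (normu m * du_dx m W) = const (of_nat p - 1) * (normu m * du_dx m W)"
  using u_dx_Pspace[OF W] du_dx_Pspace[OF W] euler_x_Pspace[OF u_dx_Pspace(1)[OF W]]
    euler_x_Pspace[OF du_dx_Pspace(1)[OF W]]
    euler_x_Pspace[OF normu_mult_Pspace[OF du_dx_Pspace(1)[OF W]]]
  by (cases "p = 0"; simp add: euler_x_def of_nat_const of_nat_diff)+

lemma euler_u_lowering:
  assumes W: "W \<in> Pspace m p q"
  shows "euler_u m (x_du m W) = const (of_nat q - 1) * x_du m W"
    and "euler_u m (du_dx m W) = const (of_nat q - 1) * du_dx m W"
  using x_du_Pspace[OF W] du_dx_Pspace[OF W] euler_u_Pspace[OF x_du_Pspace(1)[OF W]]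
    euler_u_Pspace[OF du_dx_Pspace(1)[OF W]]
  by (cases "q = 0"; simp add: euler_u_def of_nat_const of_nat_diff)+

lemma kappa_cancel:
  assumes "2 < m"
  shows "kappa m p * (2 * of_nat m + 4 * (of_nat p - 1)) = 2"
proof -
  have "(of_nat (m + 2 * p - 2) :: complex) = of_nat m + 2 * of_nat p - 2"
    using assms by (simp add: of_nat_diff)
  moreover have "(of_nat (m + 2 * p - 2) :: complex) \<noteq> 0"
    using assms by (simp only: of_nat_eq_0_iff)
  ultimately have "(of_nat m + 2 * of_nat p - 2 :: complex) \<noteq> 0"
    by metis
  then show ?thesis
    by (simp add: kappa_def field_simps)
qed

lemma lap_x_C_op:
  assumes W: "W \<in> Kerlap m p q" and m: "2 < m"
  shows "lap_x m (C_op m p q W) = 0"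
proof -
  have WP: "W \<in> Pspace m p q" and L: "lap_x m W = 0" "lap_u m W = 0"
    using W by (auto simp: Kerlap_def)
  have LD: "lap_x m (du_dx m W) = 0"
    using Kerlap_du_dx_harmonic[OF W] by simp
  have "lap_x m (C_op m p q W) = const (2 - kappa m p * (2 * of_nat m + 4 * (of_nat p - 1)))
      * (u_dx m W - const (kappa m q) * (normu m * du_dx m W))"
    unfolding C_op_def
    by (simp add: lap_x_ux_mult lap_x_normx_mult lap_x_normu_mult lap_x_u_dx lap_x_x_du L LD
        euler_x_lowering[OF WP])
      (rule poly_mapping_eqI, simp add: lookup_add lookup_minus const_simps,
        simp add: algebra_simps)
  also have "\<dots> = 0"
    by (simp only: kappa_cancel[OF m] diff_self const_zero mult_zero_left)
  finally show ?thesis .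
qed

lemma lap_u_C_op:
  assumes W: "W \<in> Kerlap m p q" and m: "2 < m"
  shows "lap_u m (C_op m p q W) = 0"
proof -
  have WP: "W \<in> Pspace m p q" and L: "lap_x m W = 0" "lap_u m W = 0"
    using W by (auto simp: Kerlap_def)
  have LD: "lap_u m (du_dx m W) = 0"
    using Kerlap_du_dx_harmonic[OF W] by simp
  have "lap_u m (C_op m p q W) = const (2 - kappa m q * (2 * of_nat m + 4 * (of_nat q - 1)))
      * (x_du m W - const (kappa m p) * (normx m * du_dx m W))"
    unfolding C_op_def
    by (simp add: lap_u_ux_mult lap_u_normx_mult lap_u_normu_mult lap_u_u_dx lap_u_x_du L LD
        euler_u_lowering[OF WP])
      (rule poly_mapping_eqI, simp add: lookup_add lookup_minus const_simps distrib_left,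
        simp add: algebra_simps)
  also have "\<dots> = 0"
    by (simp only: kappa_cancel[OF m] diff_self const_zero mult_zero_left)
  finally show ?thesis .
qed

lemma C_op_Pspace:
  assumes WP: "W \<in> Pspace m p q"
  shows "C_op m p q W \<in> Pspace m (p + 1) (q + 1)"
proof -
  have 1: "ux m * W \<in> Pspace m (p + 1) (q + 1)" by (rule ux_mult_Pspace[OF WP])
  have 2: "normx m * u_dx m W \<in> Pspace m (p + 1) (q + 1)"
  proof (cases "p = 0")
    case True then show ?thesis using u_dx_Pspace(2)[OF WP] by simp
  next
    case False
    then show ?thesis using normx_mult_Pspace[OF u_dx_Pspace(1)[OF WP]] by simp
  qed
  have 3: "normu m * x_du m W \<in> Pspace m (p + 1) (q + 1)"
  proof (cases "q = 0")
    case True then show ?thesis using x_du_Pspace(2)[OF WP] by simp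
  next
    case False
    then show ?thesis using normu_mult_Pspace[OF x_du_Pspace(1)[OF WP]] by simp
  qed
  have 4: "normx m * (normu m * du_dx m W) \<in> Pspace m (p + 1) (q + 1)"
  proof (cases "p = 0 \<or> q = 0")
    case True then show ?thesis using du_dx_Pspace(2,3)[OF WP] by auto
  next
    case False
    then show ?thesis using normx_mult_Pspace[OF normu_mult_Pspace[OF du_dx_Pspace(1)[OF WP]]] by simp
  qed
  show ?thesis unfolding C_op_def
    by (intro Pspace_add Pspace_diff Pspace_const 1 2 3 4)
qed

lemma C_op_Kerlap:
  assumes W: "W \<in> Kerlap m p q" and m: "2 < m"
  shows "C_op m p q W \<in> Kerlap m (p + 1) (q + 1)"
  using C_op_Pspace lap_x_C_op[OF W m] lap_u_C_op[OF W m] W by (auto simp: Kerlap_def)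

lemma u_dx_minus_normu_du_dx_Kerlap:
  assumes W: "W \<in> Kerlap m p q" and m: "2 < m"
  shows "u_dx m W - const (kappa m q) * (normu m * du_dx m W) \<in> Kerlap m (p - 1) (q + 1)"
proof -
  have WP: "W \<in> Pspace m p q" and L: "lap_x m W = 0" "lap_u m W = 0"
    using W by (auto simp: Kerlap_def)
  have LD: "lap_x m (du_dx m W) = 0" "lap_u m (du_dx m W) = 0"
    using Kerlap_du_dx_harmonic[OF W] by auto
  have "u_dx m W - const (kappa m q) * (normu m * du_dx m W) \<in> Pspace m (p - 1) (q + 1)"
  proof (cases "q = 0")
    case True
    then show ?thesis using u_dx_Pspace(1)[OF WP] du_dx_Pspace(3)[OF WP] by simp
  next
    case False
    then show ?thesis
      using normu_mult_Pspace[OF du_dx_Pspace(1)[OF WP]] u_dx_Pspace(1)[OF WP]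
      by (intro Pspace_diff Pspace_const) auto
  qed
  moreover have "lap_u m (u_dx m W - const (kappa m q) * (normu m * du_dx m W)) = 0"
  proof -
    have "lap_u m (u_dx m W - const (kappa m q) * (normu m * du_dx m W))
        = const (2 - kappa m q * (2 * of_nat m + 4 * (of_nat q - 1))) * du_dx m W"
      by (simp add: lap_u_u_dx lap_u_normu_mult L LD euler_u_lowering(2)[OF WP])
        (rule poly_mapping_eqI, simp add: lookup_add lookup_minus const_simps distrib_left,
          simp add: algebra_simps)
    also have "\<dots> = 0"
      by (simp only: kappa_cancel[OF m] diff_self const_zero mult_zero_left)
    finally show ?thesis .
  qed
  ultimately show ?thesis
    by (simp add: Kerlap_def lap_x_u_dx lap_x_normu_mult L LD)
qed

lemma x_du_minus_normx_du_dx_Kerlap: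
  assumes W: "W \<in> Kerlap m p q" and m: "2 < m"
  shows "x_du m W - const (kappa m p) * (normx m * du_dx m W) \<in> Kerlap m (p + 1) (q - 1)"
proof -
  have WP: "W \<in> Pspace m p q" and L: "lap_x m W = 0" "lap_u m W = 0"
    using W by (auto simp: Kerlap_def)
  have LD: "lap_x m (du_dx m W) = 0" "lap_u m (du_dx m W) = 0"
    using Kerlap_du_dx_harmonic[OF W] by auto
  have "x_du m W - const (kappa m p) * (normx m * du_dx m W) \<in> Pspace m (p + 1) (q - 1)"
  proof (cases "p = 0")
    case True
    then show ?thesis using x_du_Pspace(1)[OF WP] du_dx_Pspace(2)[OF WP] by simp
  next
    case False
    then show ?thesis
      using normx_mult_Pspace[OF du_dx_Pspace(1)[OF WP]] x_du_Pspace(1)[OF WP]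
      by (intro Pspace_diff Pspace_const) auto
  qed
  moreover have "lap_x m (x_du m W - const (kappa m p) * (normx m * du_dx m W)) = 0"
  proof -
    have "lap_x m (x_du m W - const (kappa m p) * (normx m * du_dx m W))
        = const (2 - kappa m p * (2 * of_nat m + 4 * (of_nat p - 1))) * du_dx m W"
      by (simp add: lap_x_x_du lap_x_normx_mult L LD euler_x_lowering(2)[OF WP])
        (rule poly_mapping_eqI, simp add: lookup_add lookup_minus const_simps distrib_left,
          simp add: algebra_simps)
    also have "\<dots> = 0"
      by (simp only: kappa_cancel[OF m] diff_self const_zero mult_zero_left)
    finally show ?thesis .
  qed
  ultimately show ?thesis
    by (simp add: Kerlap_def lap_u_x_du lap_u_normx_mult L LD)
qed

lemma pis_ux_mult:
  assumes W: "W \<in> Kerlap m p q" and m: "2 < m"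
  shows "pis m (p + 1) (q + 1) (ux m * W) = C_op m p q W"
proof -
  have WP: "W \<in> Pspace m p q" using W by (simp add: Kerlap_def)
  define S where "S = u_dx m W - const (kappa m q) * (normu m * du_dx m W)"
  define X where "X = x_du m W - const (kappa m p) * (normx m * du_dx m W)"
  have expansion: "ux m * W = C_op m p q W + normx m * (const (kappa m p) * S)
      + normu m * (const (kappa m q) * X)
      + normx m * normu m * (const (kappa m p) * (const (kappa m q) * du_dx m W))"
    by (simp add: C_op_def S_def X_def algebra_simps)
  have "p = 0 \<Longrightarrow> S = 0 \<and> du_dx m W = 0"
    using u_dx_Pspace(2)[OF WP] du_dx_Pspace(2)[OF WP] by (simp add: S_def)
  moreover have "q = 0 \<Longrightarrow> X = 0 \<and> du_dx m W = 0"
    using x_du_Pspace(2)[OF WP] du_dx_Pspace(3)[OF WP] by (simp add: X_def)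
  moreover have "S \<in> Kerlap m (p - 1) (q + 1)" "X \<in> Kerlap m (p + 1) (q - 1)"
    using u_dx_minus_normu_du_dx_Kerlap[OF W m] x_du_minus_normx_du_dx_Kerlap[OF W m]
    by (simp_all add: S_def X_def)
  ultimately show ?thesis
    unfolding expansion
    by (intro pis_radial_expansion C_op_Kerlap[OF W m])
      (auto intro: Kerlap_const du_dx_Kerlap[OF W, simplified])
qed

lemma fischer_C_op_right:
  assumes "lap_x m F = 0" "lap_u m F = 0"
  shows "fischer F (C_op m p q W) = fischer (du_dx m F) W"
  unfolding C_op_def
  by (simp add: fischer_add_right fischer_diff_right fischer_const_right fischer_normx_mult_right
      fischer_normu_mult_right fischer_ux_mult_right assms del: const_mult_const)

section \<open>The C-ladder\<close>

lemma c_iter_Kerlap_Suc_eq_C_op: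
  assumes G: "G \<in> Kerlap m p1 q1" and m: "2 < m"
  shows "c_iter m i p1 q1 G \<in> Kerlap m (p1 + i) (q1 + i) \<and>
    c_iter m (Suc i) p1 q1 G = C_op m (p1 + i) (q1 + i) (c_iter m i p1 q1 G)"
proof (induction i)
  case 0
  have "c_iter m (Suc 0) p1 q1 G = pis m (p1 + 1) (q1 + 1) (ux m * G)" by simp
  also have "\<dots> = C_op m p1 q1 G" by (rule pis_ux_mult[OF G m])
  finally show ?case using G by simp
next
  case (Suc i)
  have K: "c_iter m (Suc i) p1 q1 G \<in> Kerlap m (p1 + Suc i) (q1 + Suc i)"
    using Suc C_op_Kerlap[OF _ m] by simp
  have "c_iter m (Suc (Suc i)) p1 q1 G = pis m (p1 + Suc (Suc i)) (q1 + Suc (Suc i)) (ux m * c_iter m (Suc i) p1 q1 G)"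
    by simp
  also have "\<dots> = pis m (p1 + Suc i + 1) (q1 + Suc i + 1) (ux m * c_iter m (Suc i) p1 q1 G)"
    by simp
  also have "\<dots> = C_op m (p1 + Suc i) (q1 + Suc i) (c_iter m (Suc i) p1 q1 G)"
    by (rule pis_ux_mult[OF K m])
  finally show ?case using K by simp
qed

lemma x_du_u_dx_C_op:
  "x_du m (u_dx m (C_op m p q W)) =
     2 * (ux m * W) + ux m * x_du m (u_dx m W) - 2 * const (kappa m p) * (ux m * x_du m (u_dx m W))
     - 2 * const (kappa m q) * (ux m * u_dx m (x_du m W))
     + 4 * const (kappa m p) * const (kappa m q) * (ux m * (ux m * du_dx m W))
     + normx m * (u_dx m W - 2 * const (kappa m p) * u_dx m W - const (kappa m p) * x_du m (u_dx m (u_dx m W))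
        + 2 * const (kappa m p) * const (kappa m q) * (normu m * du_dx m W)
        + 2 * const (kappa m p) * const (kappa m q) * (ux m * u_dx m (du_dx m W))
        + const (kappa m p) * const (kappa m q) * (normu m * x_du m (u_dx m (du_dx m W))))
     + normu m * (x_du m W - const (kappa m q) * x_du m (u_dx m (x_du m W))
        + 2 * const (kappa m p) * const (kappa m q) * (ux m * x_du m (du_dx m W)))"
  unfolding C_op_def
  by (simp add: x_du_normx_mult x_du_normu_mult x_du_ux_mult u_dx_normx_mult u_dx_normu_mult
      u_dx_ux_mult del: const_mult_const; simp add: algebra_simps del: const_mult_const)

lemma du_dx_C_op:
  "du_dx m (C_op m p q W) =
     of_nat m * W + euler_x m W + euler_u m W + ux m * du_dx m W
     - 2 * const (kappa m p) * x_du m (u_dx m W) - 2 * const (kappa m q) * u_dx m (x_du m W)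
     + 4 * const (kappa m p) * const (kappa m q) * (ux m * du_dx m W)
     + normx m * (const (kappa m p) * const (kappa m q) * (normu m * du_dx m (du_dx m W) + 2 * u_dx m (du_dx m W))
         - const (kappa m p) * (u_dx m (du_dx m W) + lap_x m W))
     + normu m * (2 * const (kappa m p) * const (kappa m q) * x_du m (du_dx m W)
         - const (kappa m q) * (x_du m (du_dx m W) + lap_u m W))"
  unfolding C_op_def
  by (simp add: du_dx_normx_mult du_dx_normu_mult du_dx_ux_mult du_dx_x_du du_dx_u_dx x_du_normu_mult
      del: const_mult_const; simp add: algebra_simps del: const_mult_const)

lemma u_dx_x_du_Pspace: "W \<in> Pspace m p q \<Longrightarrow> u_dx m (x_du m W) = x_du m (u_dx m W) - of_nat p * W + of_nat q * W"
  using x_du_u_dx[of m W] euler_x_Pspace[of W m p q] euler_u_Pspace[of W m p q] by (simp add: algebra_simps)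

text \<open>Holds for V = C^n F with Q = \<langle>u,x\<rangle>^n F; it is what makes
\<langle>\<partial>_u,\<partial>_x\<rangle> (C V) a multiple of V.\<close>

definition ladder_invariant :: "nat \<Rightarrow> cpoly \<Rightarrow> cpoly \<Rightarrow> bool" where
  "ladder_invariant m V Q \<longleftrightarrow> in_radial_ideal m (V - Q)
     \<and> (\<exists>c. in_radial_ideal m (x_du m (u_dx m V) - const c * Q))
     \<and> (\<exists>k. in_radial_ideal m (ux m * du_dx m V - const k * Q))"

lemma C_op_radial_congruent:
  assumes "in_radial_ideal m (V - Q)"
  shows "in_radial_ideal m (C_op m p q V - ux m * Q)"
proof -
  have "C_op m p q V - ux m * Q
      = normx m * (const (kappa m p) * (const (kappa m q) * (normu m * du_dx m V))
          - const (kappa m p) * u_dx m V)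
        + normu m * (- const (kappa m q) * x_du m V) + ux m * (V - Q)"
    by (simp add: C_op_def algebra_simps del: const_mult_const)
  then show ?thesis
    by (simp add: in_radial_ideal_add in_radial_ideal_diff in_radial_ideal_mult assms)
qed

lemma x_du_u_dx_C_op_congruent:
  assumes VP: "V \<in> Pspace m p q" and "ladder_invariant m V Q"
  shows "\<exists>c. in_radial_ideal m (x_du m (u_dx m (C_op m p q V)) - const c * (ux m * Q))"
proof -
  obtain c k where A: "in_radial_ideal m (V - Q)"
    and B: "in_radial_ideal m (x_du m (u_dx m V) - const c * Q)"
    and C: "in_radial_ideal m (ux m * du_dx m V - const k * Q)"
    using assms(2) unfolding ladder_invariant_def by blast
  define a where "a = kappa m p"
  define b where "b = kappa m q"
  define s where "s = 2 + (1 - 2 * a - 2 * b) * c + 2 * b * (of_nat p - of_nat q) + 4 * a * b * k"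
  obtain A1 B1 where XY1: "x_du m (u_dx m (C_op m p q V)) =
     2 * (ux m * V) + ux m * x_du m (u_dx m V) - 2 * const a * (ux m * x_du m (u_dx m V))
     - 2 * const b * (ux m * u_dx m (x_du m V))
     + 4 * const a * const b * (ux m * (ux m * du_dx m V)) + normx m * A1 + normu m * B1"
    using x_du_u_dx_C_op[of m p q V] unfolding a_def b_def by blast
  have "x_du m (u_dx m (C_op m p q V)) - const s * (ux m * Q) =
     normx m * A1 + normu m * B1 + ux m * ((2 + 2 * const b * (of_nat p - of_nat q)) * (V - Q)
       + (1 - 2 * const a - 2 * const b) * (x_du m (u_dx m V) - const c * Q)
       + 4 * const a * const b * (ux m * du_dx m V - const k * Q))"
    unfolding XY1 u_dx_x_du_Pspace[OF VP] s_def const_hom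
    by (simp add: algebra_simps del: const_mult_const)
  then have "in_radial_ideal m (x_du m (u_dx m (C_op m p q V)) - const s * (ux m * Q))"
    by (simp add: in_radial_ideal_add in_radial_ideal_diff in_radial_ideal_mult A B C)
  then show ?thesis by blast
qed

lemma du_dx_C_op_eq:
  assumes V: "V \<in> Kerlap m p q" and m: "2 < m" and "ladder_invariant m V Q"
  shows "\<exists>s. du_dx m (C_op m p q V) = const s * V"
proof -
  obtain c k where A: "in_radial_ideal m (V - Q)"
    and B: "in_radial_ideal m (x_du m (u_dx m V) - const c * Q)"
    and C: "in_radial_ideal m (ux m * du_dx m V - const k * Q)"
    using assms(3) unfolding ladder_invariant_def by blast
  have VP: "V \<in> Pspace m p q" using V by (simp add: Kerlap_def)
  define a where "a = kappa m p"
  define b where "b = kappa m q"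
  define s where "s = of_nat m + of_nat p + of_nat q + 2 * b * (of_nat p - of_nat q)
     - (2 * a + 2 * b) * c + (1 + 4 * a * b) * k"
  obtain A2 B2 where D1: "du_dx m (C_op m p q V) =
     of_nat m * V + euler_x m V + euler_u m V + ux m * du_dx m V
     - 2 * const a * x_du m (u_dx m V) - 2 * const b * u_dx m (x_du m V)
     + 4 * const a * const b * (ux m * du_dx m V) + normx m * A2 + normu m * B2"
    using du_dx_C_op[of m p q V] unfolding a_def b_def by blast
  have "du_dx m (C_op m p q V) - const s * V =
     normx m * A2 + normu m * B2
     - (2 * const a + 2 * const b) * (x_du m (u_dx m V) - const c * Q)
     - (2 * const a + 2 * const b) * const c * (Q - V)
     + (1 + 4 * const a * const b) * (ux m * du_dx m V - const k * Q)
     + (1 + 4 * const a * const b) * const k * (Q - V)"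
    unfolding D1 u_dx_x_du_Pspace[OF VP] euler_x_Pspace[OF VP] euler_u_Pspace[OF VP] s_def const_hom
    by (simp add: algebra_simps del: const_mult_const)
  moreover have "in_radial_ideal m (Q - V)"
    using in_radial_ideal_uminus[OF A] by simp
  ultimately have "in_radial_ideal m (du_dx m (C_op m p q V) - const s * V)"
    by (simp add: in_radial_ideal_add in_radial_ideal_diff in_radial_ideal_mult A B C)
  moreover have "du_dx m (C_op m p q V) \<in> Kerlap m p q"
    using du_dx_Kerlap[OF C_op_Kerlap[OF V m]] by simp
  ultimately have "du_dx m (C_op m p q V) = const s * V"
    using Kerlap_const[OF V] by (auto simp: Kerlap_def intro: harmonic_radial_congruent_eq)
  then show ?thesis by blast
qed

lemma ladder_invariant_C_op:
  assumes V: "V \<in> Kerlap m p q" and m: "2 < m" and inv: "ladder_invariant m V Q"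
  shows "ladder_invariant m (C_op m p q V) (ux m * Q)"
proof -
  have A: "in_radial_ideal m (V - Q)"
    using inv by (simp add: ladder_invariant_def)
  obtain s where s: "du_dx m (C_op m p q V) = const s * V"
    using du_dx_C_op_eq[OF V m inv] by blast
  have "ux m * du_dx m (C_op m p q V) - const s * (ux m * Q) = const s * (ux m * (V - Q))"
    by (simp add: s algebra_simps del: const_mult_const)
  then have "in_radial_ideal m (ux m * du_dx m (C_op m p q V) - const s * (ux m * Q))"
    by (simp add: in_radial_ideal_mult A)
  moreover have "V \<in> Pspace m p q"
    using V by (simp add: Kerlap_def)
  ultimately show ?thesis
    using C_op_radial_congruent[OF A] x_du_u_dx_C_op_congruent[OF _ inv]
    unfolding ladder_invariant_def by blast
qed

definition ladder_base :: "nat \<Rightarrow> nat \<Rightarrow> nat \<Rightarrow> cpoly \<Rightarrow> bool" where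
  "ladder_base m p q F \<longleftrightarrow> F \<in> Kerlap m p q \<and> du_dx m F = 0
     \<and> (\<exists>c. x_du m (u_dx m F) = const c * F)"

lemma ladder_invariant_c_iter:
  assumes F: "ladder_base m p q F" and m: "2 < m"
  shows "ladder_invariant m (c_iter m n p q F) (ux m ^ n * F)"
proof (induction n)
  case 0
  obtain c where "x_du m (u_dx m F) = const c * F" "du_dx m F = 0"
    using F by (auto simp: ladder_base_def)
  then have "in_radial_ideal m (x_du m (u_dx m F) - const c * F)"
    and "in_radial_ideal m (ux m * du_dx m F - const 0 * F)"
    by simp_all
  then show ?case
    unfolding ladder_invariant_def
    by (simp only: c_iter.simps(1) power_0 mult_1_left diff_self in_radial_ideal_0 simp_thms) blast
next
  case (Suc n)
  have "c_iter m n p q F \<in> Kerlap m (p + n) (q + n)"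
    and "c_iter m (Suc n) p q F = C_op m (p + n) (q + n) (c_iter m n p q F)"
    using c_iter_Kerlap_Suc_eq_C_op[of F m p q n] F m by (auto simp: ladder_base_def)
  then show ?case
    using ladder_invariant_C_op[OF _ m Suc.IH] by (simp add: mult.assoc)
qed

lemma du_dx_c_iter_Suc:
  assumes F: "ladder_base m p q F" and m: "2 < m"
  shows "\<exists>s. du_dx m (c_iter m (Suc n) p q F) = const s * c_iter m n p q F"
  using du_dx_C_op_eq[OF _ m ladder_invariant_c_iter[OF F m]] c_iter_Kerlap_Suc_eq_C_op[of F m p q n] F m
  by (auto simp: ladder_base_def)

lemma c_iter_harmonic:
  assumes G0: "G0 \<in> Kerlap m p0 q0" and m: "2 < m"
  shows "lap_x m (c_iter m n p0 q0 G0) = 0" "lap_u m (c_iter m n p0 q0 G0) = 0"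
  using c_iter_Kerlap_Suc_eq_C_op[OF G0 m, of n] by (auto simp: Kerlap_def)

lemma fischer_c_iter_lowering:
  assumes F: "ladder_base m p q F" and G: "G \<in> Kerlap m p' q'" and m: "2 < m"
  shows "i < i' \<Longrightarrow> fischer (c_iter m i p q F) (c_iter m i' p' q' G) = 0"
    and "\<exists>z. fischer (c_iter m i p q F) (c_iter m i p' q' G) = z * fischer F G"
proof -
  have FK: "F \<in> Kerlap m p q" and bottom: "du_dx m (c_iter m 0 p q F) = 0"
    using F by (simp_all add: ladder_base_def)
  have adjoint: "fischer (c_iter m k p q F) (c_iter m (Suc j) p' q' G)
      = fischer (du_dx m (c_iter m k p q F)) (c_iter m j p' q' G)" for k j
    using c_iter_Kerlap_Suc_eq_C_op[OF G m, of j] c_iter_harmonic[OF FK m, of k]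
    by (simp add: fischer_C_op_right del: c_iter.simps)
  have lowering: "\<exists>c. du_dx m (c_iter m (Suc k) p q F) = const c * c_iter m k p q F" for k
    by (rule du_dx_c_iter_Suc[OF F m])
  show "i < i' \<Longrightarrow> fischer (c_iter m i p q F) (c_iter m i' p' q' G) = 0"
    by (rule fischer_lowering_orthogonal[where L = "du_dx m" and f = "\<lambda>k. c_iter m k p q F"
        and g = "\<lambda>j. c_iter m j p' q' G", OF adjoint lowering bottom])
  show "\<exists>z. fischer (c_iter m i p q F) (c_iter m i p' q' G) = z * fischer F G"
    using fischer_lowering_same[where L = "du_dx m" and f = "\<lambda>k. c_iter m k p q F"
        and g = "\<lambda>j. c_iter m j p' q' G", OF adjoint lowering] by simp
qed

section \<open>Orthogonality of the decomposition\<close>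

definition ladder_elem :: "nat \<Rightarrow> nat \<Rightarrow> nat \<Rightarrow> nat \<Rightarrow> nat \<Rightarrow> cpoly \<Rightarrow> cpoly" where
  "ladder_elem m p q i j H = c_iter m i (p - i) (q - i) (su_iter m j (p - i + j) (q - i - j) H)"

lemma ladder_base_u_dx_funpow:
  assumes H: "H \<in> Harm m p0 q0"
  shows "ladder_base m (p0 - j) (q0 + j) ((u_dx m ^^ j) H)"
  using u_dx_funpow_Harm[OF H, of j] x_du_u_dx_funpow_Suc[OF H, of j]
  by (simp add: ladder_base_def Kerlap_def)

lemma ladder_elem_eq_c_iter:
  assumes H: "H \<in> Harm m (p - i + j) (q - i - j)" and "i + j \<le> q"
  shows "ladder_elem m p q i j H = c_iter m i (p - i) (q - i) ((u_dx m ^^ j) H)"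
    and "ladder_base m (p - i) (q - i) ((u_dx m ^^ j) H)"
proof -
  show "ladder_elem m p q i j H = c_iter m i (p - i) (q - i) ((u_dx m ^^ j) H)"
    by (simp only: ladder_elem_def su_iter_Harm[OF H])
  have "p - i + j - j = p - i" "q - i - j + j = q - i"
    using \<open>i + j \<le> q\<close> by simp_all
  then show "ladder_base m (p - i) (q - i) ((u_dx m ^^ j) H)"
    using ladder_base_u_dx_funpow[OF H, of j] by simp
qed

lemma ladder_elem_Kerlap:
  assumes H: "H \<in> Harm m (p - i + j) (q - i - j)" and "i \<le> p" "i + j \<le> q" and m: "2 < m"
  shows "ladder_elem m p q i j H \<in> Kerlap m p q"
  using c_iter_Kerlap_Suc_eq_C_op[of "(u_dx m ^^ j) H" m "p - i" "q - i" i] ladder_elem_eq_c_iter[OF H]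
    assms(2,3) m
  by (simp add: ladder_base_def)

lemma fischer_ladder_elem_lex_less:
  assumes H: "H \<in> Harm m (p - i + j) (q - i - j)" "i + j \<le> q"
    and H': "H' \<in> Harm m (p' - i' + j') (q' - i' - j')" "i' + j' \<le> q'"
    and ij: "i < i' \<or> i = i' \<and> j < j'" and m: "2 < m"
  shows "fischer (ladder_elem m p q i j H) (ladder_elem m p' q' i' j' H') = 0"
proof -
  note F = ladder_elem_eq_c_iter[OF H] and G = ladder_elem_eq_c_iter[OF H']
  have GK: "(u_dx m ^^ j') H' \<in> Kerlap m (p' - i') (q' - i')"
    using G(2) by (simp add: ladder_base_def)
  from ij consider "i < i'" | "i = i'" "j < j'" by blast
  then show ?thesis
  proof cases
    case 1
    then show ?thesis
      unfolding F(1) G(1) by (rule fischer_c_iter_lowering(1)[OF F(2) GK m])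
  next
    case 2
    have "fischer ((u_dx m ^^ j) H) ((u_dx m ^^ j') H') = 0"
      by (rule fischer_u_dx_funpow_lowering(1)[OF H(1) 2(2)])
    moreover obtain z where "fischer (c_iter m i (p - i) (q - i) ((u_dx m ^^ j) H))
        (c_iter m i (p' - i) (q' - i) ((u_dx m ^^ j') H'))
      = z * fischer ((u_dx m ^^ j) H) ((u_dx m ^^ j') H')"
      using fischer_c_iter_lowering(2)[OF F(2) GK m] 2(1) by blast
    ultimately show ?thesis
      unfolding F(1) G(1) using 2(1) by simp
  qed
qed

lemma fischer_ladder_elem_orthogonal:
  assumes H: "H \<in> Harm m (p - i + j) (q - i - j)" "i + j \<le> q"
    and H': "H' \<in> Harm m (p' - i' + j') (q' - i' - j')" "i' + j' \<le> q'"
    and ij: "(i, j) \<noteq> (i', j')" and m: "2 < m"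
  shows "fischer (ladder_elem m p q i j H) (ladder_elem m p' q' i' j' H') = 0"
proof -
  from ij consider "i < i' \<or> i = i' \<and> j < j'" | "i' < i \<or> i' = i \<and> j' < j"
    by (metis linorder_neqE_nat prod.inject)
  then show ?thesis
  proof cases
    case 1
    then show ?thesis by (rule fischer_ladder_elem_lex_less[OF H H' _ m])
  next
    case 2
    then show ?thesis
      using fischer_ladder_elem_lex_less[OF H' H _ m] fischer_swap by (metis complex_cnj_zero)
  qed
qed

lemma Vsub_elemE:
  assumes "(a, b, i, j) \<in> Idx k l" and "P \<in> Vsub m k l (a, b, i, j)"
  obtains H where "H \<in> Harm m (k - 2*a - i + j) (l - 2*b - i - j)"
    and "P = normx m ^ a * normu m ^ b * ladder_elem m (k - 2*a) (l - 2*b) i j H"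
    and "i \<le> k - 2*a" "i + j \<le> l - 2*b"
proof -
  from assms(2) obtain H where "H \<in> Harm m (k - 2*a - i + j) (l - 2*b - i - j)"
    and "P = normx m ^ a * normu m ^ b * ladder_elem m (k - 2*a) (l - 2*b) i j H"
    unfolding Vsub_def Let_def prod.case ladder_elem_def by blast
  moreover have "i \<le> k - 2*a" "i + j \<le> l - 2*b"
    using assms(1) by (auto simp: Idx_def)
  ultimately show ?thesis using that by blast
qed

theorem corollary6p1:
  fixes m k l :: nat
  assumes "m > 4"
    and "t \<in> Idx k l" and "t' \<in> Idx k l" and "t \<noteq> t'"
    and "P \<in> Vsub m k l t" and "Q \<in> Vsub m k l t'"
  shows "fischer P Q = 0"
proof -
  have m: "2 < m" using assms(1) by simp
  obtain a b i j a' b' i' j' where t: "t = (a, b, i, j)" and t': "t' = (a', b', i', j')"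
    using prod_cases4 by metis
  obtain H where H: "H \<in> Harm m (k - 2*a - i + j) (l - 2*b - i - j)"
    and P: "P = normx m ^ a * normu m ^ b * ladder_elem m (k - 2*a) (l - 2*b) i j H"
    and ij: "i \<le> k - 2*a" "i + j \<le> l - 2*b"
    using Vsub_elemE assms(2,5) unfolding t by blast
  obtain H' where H': "H' \<in> Harm m (k - 2*a' - i' + j') (l - 2*b' - i' - j')"
    and Q: "Q = normx m ^ a' * normu m ^ b' * ladder_elem m (k - 2*a') (l - 2*b') i' j' H'"
    and ij': "i' \<le> k - 2*a'" "i' + j' \<le> l - 2*b'"
    using Vsub_elemE assms(3,6) unfolding t' by blast
  define F where "F = ladder_elem m (k - 2*a) (l - 2*b) i j H"
  define G where "G = ladder_elem m (k - 2*a') (l - 2*b') i' j' H'"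
  have FG: "F \<in> Kerlap m (k - 2*a) (l - 2*b)" "G \<in> Kerlap m (k - 2*a') (l - 2*b')"
    using ladder_elem_Kerlap[OF H ij m] ladder_elem_Kerlap[OF H' ij' m] by (simp_all add: F_def G_def)
  show ?thesis
  proof (cases "(a, b) = (a', b')")
    case False
    then show ?thesis
      unfolding P Q F_def[symmetric] G_def[symmetric] by (rule fischer_radial_orthogonal[OF FG])
  next
    case True
    with assms(4) have "fischer F G = 0"
      using fischer_ladder_elem_orthogonal[OF H ij(2) H' ij'(2) _ m] by (auto simp: t t' F_def G_def)
    moreover obtain z where "fischer P Q = z * fischer F G"
      using fischer_radial_same[OF FG(1), of a b G] True unfolding P Q F_def[symmetric] G_def[symmetric] by auto
    ultimately show ?thesis by simp
  qed
qed

end
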